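(* Let $\Gamma$ be a gain operator on $\ell^\infty_+(\mathcal I)$. Assume there is $\rho\in\mathcal K_\infty$ such that $\Gamma_\rho$ satisfies the $\oplus$-MBI property and, for each $r\ge0$, the point $\sigma_{*,\rho}(r):=\bigoplus_{n=0}^\infty\hat\Gamma_\rho^n(r\mathbf 1)$ is a globally attractive fixed point of the operator $s\mapsto r\mathbf 1\oplus\Gamma_\rho(s)$ (i.e. every trajectory of this operator converges in norm to $\sigma_{*,\rho}(r)$). Then there exists a path of strict decay for $\Gamma$.
   Context: Let $\mathcal I$ be a nonempty countable index set; $\ell^\infty_+(\mathcal I)$ is the cone of nonnegative real families $s=(s_i)_{i\in\mathcal I}$ with $\|s\|:=\sup_i|s_i|<\infty$, ordered componentwise; $\mathbf 1$ is the all-ones vector; $\oplus$ is the componentwise maximum, $\bigoplus$ the componentwise supremum. $\mathcal K_\infty$: continuous strictly increasing unbounded $\gamma:\mathbb R_+\to\mathbb R_+$ with $\gamma(0)=0$, acting on $\ell^\infty_+(\mathcal I)$ componentwise. For $\mathcal J\subset\mathcal I$, $s_{|\mathcal J}$ agrees with $s$ on $\mathcal J$ and is $0$ elsewhere. Gain operator: for each $i$ a finite (possibly empty) $\mathcal I_i\subset\mathcal I\setminus\{i\}$; directed graph $\mathcal G$ with vertices $\mathcal I$ and edges $ji$, $j\in\mathcal I_i$; a pointwise equicontinuous family $\gamma_{ij}\in\mathcal K_\infty$ ($ji\in E(\mathcal G)$); functions $\mu_i:\ell^\infty_+(\mathcal I)\to[0,\infty]$ with (M1) some $\xi\in\mathcal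 K_\infty$ has $\mu_i(0)=0$, $\mu_i(s)\ge\xi(\|s\|)$; (M2) $\mu_i$ monotone; (M3) for each finite $\mathcal J$, $\mu_i$ restricted to vectors vanishing off $\mathcal J$ is finite-valued and continuous; (M4) for each norm-bounded $A$ and $\varepsilon>0$ there is $\delta>0$ with $\sup_i|\mu_i(s_{|\mathcal I_i})-\mu_i(s^0_{|\mathcal I_i})|\le\varepsilon$ whenever $s^0\in A$, $\|s-s^0\|\le\delta$. $\Gamma_i(s):=\mu_i([\gamma_{ij}(s_j)]_{j\in\mathcal I_i})$ (argument zero outside $\mathcal I_i$). $\Gamma_\rho:=(\mathrm{id}+\rho)\circ\Gamma$, $\hat\Gamma_\rho(s):=s\oplus\Gamma_\rho(s)$. A monotone $T$ has the $\oplus$-MBI property if there is $\varphi\in\mathcal K_\infty$ such that for all $s,b$, $s\le b\oplus T(s)$ implies $\|s\|\le\varphi(\|b\|)$. A path of strict decay for $\Gamma$ is a map $\sigma:\mathbb R_+\to\ell^\infty_+(\mathcal I)$ such that: (i) for some $\rho\in\mathcal K_\infty$, $\Gamma_\rho(\sigma(r))\le\sigma(r)$ for all $r\ge0$; (ii) $\varphi_{\min}(r)\mathbf 1\le\sigma(r)\le\varphi_{\max}(r)\mathbf 1$ for some $\varphi_{\min},\varphi_{\max}\in\mathcal K_\infty$; (iii) each $\sigma_i\in\mathcal K_\infty$; (iv) for each compact $K\subset(0,\infty)$ there are $0<l\le L$ with $l|r_1-r_2|\le|\sigma_i^{-1}(r_1)-\sigma_i^{-1}(r_2)|\le L|r_1-r_2|$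 for all $r_1,r_2\in K$, $i\in\mathcal I$. *)

theory Defs
  imports "HOL-Analysis.Analysis"
begin

definition linf_pos :: "('i \<Rightarrow> real) set" where
  "linf_pos = {s. (\<forall>i. 0 \<le> s i) \<and> bdd_above (range (\<lambda>i. \<bar>s i\<bar>))}"

definition supnorm :: "('i \<Rightarrow> real) \<Rightarrow> real" where
  "supnorm s = (SUP i. \<bar>s i\<bar>)"

definition oplus :: "('i \<Rightarrow> real) \<Rightarrow> ('i \<Rightarrow> real) \<Rightarrow> ('i \<Rightarrow> real)" where
  "oplus s t = (\<lambda>i. max (s i) (t i))"

definition restr :: "('i \<Rightarrow> real) \<Rightarrow> 'i set \<Rightarrow> ('i \<Rightarrow> real)" where
  "restr s J = (\<lambda>i. if i \<in> J then s i else 0)"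

definition Kinf :: "(real \<Rightarrow> real) \<Rightarrow> bool" where
  "Kinf g \<longleftrightarrow> continuous_on {0..} g \<and> strict_mono_on {0..} g \<and> g 0 = 0
      \<and> (\<forall>M. \<exists>x\<ge>0. M < g x)"

text \<open>Gain operator data: neighbour sets Ii, gains gam i j (for edge ji), functions mu i.\<close>
definition gain_operator ::
  "('i \<Rightarrow> 'i set) \<Rightarrow> ('i \<Rightarrow> 'i \<Rightarrow> real \<Rightarrow> real) \<Rightarrow> ('i \<Rightarrow> ('i \<Rightarrow> real) \<Rightarrow> ereal) \<Rightarrow> bool" where
  "gain_operator Ii gam mu \<longleftrightarrow>
     (\<forall>i. finite (Ii i) \<and> i \<notin> Ii i)
   \<and> (\<forall>i. \<forall>j\<in>Ii i. Kinf (gam i j))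
   \<and> (\<forall>r\<ge>0. \<forall>\<epsilon>>0. \<exists>\<delta>>0. \<forall>i. \<forall>j\<in>Ii i. \<forall>r'\<ge>0.
          \<bar>r' - r\<bar> < \<delta> \<longrightarrow> \<bar>gam i j r' - gam i j r\<bar> < \<epsilon>)
   \<and> (\<forall>i s. s \<in> linf_pos \<longrightarrow> 0 \<le> mu i s)
   \<comment> \<open>(M1)\<close>
   \<and> (\<exists>\<xi>. Kinf \<xi> \<and> (\<forall>i. mu i (\<lambda>_. 0) = 0 \<and>
          (\<forall>s\<in>linf_pos. ereal (\<xi> (supnorm s)) \<le> mu i s)))
   \<comment> \<open>(M2)\<close>
   \<and> (\<forall>i. \<forall>s\<in>linf_pos. \<forall>t\<in>linf_pos. (\<forall>k. s k \<le> t k) \<longrightarrow> mu i s \<le> mu i t)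
   \<comment> \<open>(M3)\<close>
   \<and> (\<forall>i J. finite J \<longrightarrow>
        (\<forall>s\<in>linf_pos. (\<forall>k. k \<notin> J \<longrightarrow> s k = 0) \<longrightarrow>
           mu i s \<noteq> \<infinity> \<and>
           (\<forall>\<epsilon>>0. \<exists>\<delta>>0. \<forall>t\<in>linf_pos. (\<forall>k. k \<notin> J \<longrightarrow> t k = 0) \<longrightarrow>
               supnorm (\<lambda>k. t k - s k) < \<delta> \<longrightarrow>
               \<bar>real_of_ereal (mu i t) - real_of_ereal (mu i s)\<bar> < \<epsilon>)))
   \<comment> \<open>(M4)\<close>
   \<and> (\<forall>A \<subseteq> linf_pos. (\<exists>R. \<forall>s\<in>A. supnorm s \<le> R) \<longrightarrow>
        (\<forall>\<epsilon>>0. \<exists>\<delta>>0. \<forall>s0\<in>A. \<forall>s\<in>linf_pos. supnorm (\<lambda>k. s k - s0 k) \<le> \<delta> \<longrightarrow>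
           (\<forall>i. \<bar>real_of_ereal (mu i (restr s (Ii i))) - real_of_ereal (mu i (restr s0 (Ii i)))\<bar> \<le> \<epsilon>)))"

text \<open>The gain operator itself (values finite by (M3)).\<close>
definition Gam ::
  "('i \<Rightarrow> 'i set) \<Rightarrow> ('i \<Rightarrow> 'i \<Rightarrow> real \<Rightarrow> real) \<Rightarrow> ('i \<Rightarrow> ('i \<Rightarrow> real) \<Rightarrow> ereal)
    \<Rightarrow> ('i \<Rightarrow> real) \<Rightarrow> ('i \<Rightarrow> real)" where
  "Gam Ii gam mu s = (\<lambda>i. real_of_ereal (mu i (\<lambda>j. if j \<in> Ii i then gam i j (s j) else 0)))"

definition Gam_rho ::
  "('i \<Rightarrow> 'i set) \<Rightarrow> ('i \<Rightarrow> 'i \<Rightarrow> real \<Rightarrow> real) \<Rightarrow> ('i \<Rightarrow> ('i \<Rightarrow> real) \<Rightarrow> ereal)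
    \<Rightarrow> (real \<Rightarrow> real) \<Rightarrow> ('i \<Rightarrow> real) \<Rightarrow> ('i \<Rightarrow> real)" where
  "Gam_rho Ii gam mu \<rho> s = (\<lambda>i. Gam Ii gam mu s i + \<rho> (Gam Ii gam mu s i))"

definition Gam_hat ::
  "('i \<Rightarrow> 'i set) \<Rightarrow> ('i \<Rightarrow> 'i \<Rightarrow> real \<Rightarrow> real) \<Rightarrow> ('i \<Rightarrow> ('i \<Rightarrow> real) \<Rightarrow> ereal)
    \<Rightarrow> (real \<Rightarrow> real) \<Rightarrow> ('i \<Rightarrow> real) \<Rightarrow> ('i \<Rightarrow> real)" where
  "Gam_hat Ii gam mu \<rho> s = oplus s (Gam_rho Ii gam mu \<rho> s)"

definition oplus_MBI :: "(('i \<Rightarrow> real) \<Rightarrow> ('i \<Rightarrow> real)) \<Rightarrow> bool" where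
  "oplus_MBI T \<longleftrightarrow> (\<exists>\<phi>. Kinf \<phi> \<and> (\<forall>s\<in>linf_pos. \<forall>b\<in>linf_pos.
      (\<forall>i. s i \<le> oplus b (T s) i) \<longrightarrow> supnorm s \<le> \<phi> (supnorm b)))"

definition sigma_star ::
  "('i \<Rightarrow> 'i set) \<Rightarrow> ('i \<Rightarrow> 'i \<Rightarrow> real \<Rightarrow> real) \<Rightarrow> ('i \<Rightarrow> ('i \<Rightarrow> real) \<Rightarrow> ereal)
    \<Rightarrow> (real \<Rightarrow> real) \<Rightarrow> real \<Rightarrow> ('i \<Rightarrow> real)" where
  "sigma_star Ii gam mu \<rho> r = (\<lambda>i. SUP n. ((Gam_hat Ii gam mu \<rho>) ^^ n) (\<lambda>_. r) i)"

definition sigma_star_exists ::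
  "('i \<Rightarrow> 'i set) \<Rightarrow> ('i \<Rightarrow> 'i \<Rightarrow> real \<Rightarrow> real) \<Rightarrow> ('i \<Rightarrow> ('i \<Rightarrow> real) \<Rightarrow> ereal)
    \<Rightarrow> (real \<Rightarrow> real) \<Rightarrow> real \<Rightarrow> bool" where
  "sigma_star_exists Ii gam mu \<rho> r \<longleftrightarrow>
     (\<forall>i. bdd_above (range (\<lambda>n. ((Gam_hat Ii gam mu \<rho>) ^^ n) (\<lambda>_. r) i)))"

definition glob_attr_fixpoint :: "(('i \<Rightarrow> real) \<Rightarrow> ('i \<Rightarrow> real)) \<Rightarrow> ('i \<Rightarrow> real) \<Rightarrow> bool" where
  "glob_attr_fixpoint T \<sigma> \<longleftrightarrow> \<sigma> \<in> linf_pos \<and> T \<sigma> = \<sigma> \<and>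
     (\<forall>s\<in>linf_pos. (\<lambda>n. supnorm (\<lambda>i. (T ^^ n) s i - \<sigma> i)) \<longlonglongrightarrow> 0)"

definition path_strict_decay ::
  "('i \<Rightarrow> 'i set) \<Rightarrow> ('i \<Rightarrow> 'i \<Rightarrow> real \<Rightarrow> real) \<Rightarrow> ('i \<Rightarrow> ('i \<Rightarrow> real) \<Rightarrow> ereal)
    \<Rightarrow> (real \<Rightarrow> 'i \<Rightarrow> real) \<Rightarrow> bool" where
  "path_strict_decay Ii gam mu \<sigma> \<longleftrightarrow>
     (\<forall>r\<ge>0. \<sigma> r \<in> linf_pos)
   \<and> (\<exists>\<rho>. Kinf \<rho> \<and> (\<forall>r\<ge>0. \<forall>i. Gam_rho Ii gam mu \<rho> (\<sigma> r) i \<le> \<sigma> r i))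
   \<and> (\<exists>\<phi>min \<phi>max. Kinf \<phi>min \<and> Kinf \<phi>max \<and>
        (\<forall>r\<ge>0. \<forall>i. \<phi>min r \<le> \<sigma> r i \<and> \<sigma> r i \<le> \<phi>max r))
   \<and> (\<forall>i. Kinf (\<lambda>r. \<sigma> r i))
   \<and> (\<forall>K. compact K \<and> K \<subseteq> {0<..} \<longrightarrow>
        (\<exists>l L. 0 < l \<and> l \<le> L \<and> (\<forall>r1\<in>K. \<forall>r2\<in>K. \<forall>i.
           l * \<bar>r1 - r2\<bar> \<le> \<bar>inv_into {0..} (\<lambda>r. \<sigma> r i) r1 - inv_into {0..} (\<lambda>r. \<sigma> r i) r2\<bar>
         \<and> \<bar>inv_into {0..} (\<lambda>r. \<sigma> r i) r1 - inv_into {0..} (\<lambda>r. \<sigma> r i) r2\<bar> \<le> L * \<bar>r1 - r2\<bar>)))"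

end

(* Let sstar r be the attractive fixed point of s \<mapsto> r\<one> \<oplus> \<Gamma>_\<rho>(s).  Then r \<le> sstar r \<le> \<phi>(r) by the
   MBI property, \<Gamma>_\<rho>(sstar r) \<le> sstar r, and attractivity makes sstar r monotone and continuous
   in r, uniformly in the index.  Replacing \<rho> by \<rho>/2 opens a gap of width margin S below sstar S.
   By continuity there is a grid S_k (k \<in> \<int>), tending to 0 and \<infinity>, along which sstar grows by less
   than half of this gap, so that lower k = \<Gamma>_{\<rho>/2}(sstar S_{k+1}) stays definitely below
   upper k = sstar S_k.  Node values between lower k and upper k with weights increasing in k are
   strictly increasing in k, and the piecewise linear path through them at the nodes 2^k decays:
   on [2^k, 2^{k+1}] it lies below sstar S_{k+1}, so its image under \<Gamma>_{\<rho>/2} lies below lower k,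
   hence below the path. *)

theory Submission
  imports Defs
begin

section \<open>Sup norm and functions of class \<open>\<K>\<^sub>\<infinity>\<close>\<close>

lemma supnorm_le: "(\<And>i. \<bar>x i\<bar> \<le> B) \<Longrightarrow> supnorm x \<le> B"
  unfolding supnorm_def by (rule cSUP_least) auto

lemma abs_le_supnorm: "(\<And>i. \<bar>x i\<bar> \<le> B) \<Longrightarrow> \<bar>x i\<bar> \<le> supnorm x"
  unfolding supnorm_def by (rule cSUP_upper) (auto intro!: bdd_aboveI)

lemma linf_posI: "(\<And>i. 0 \<le> x i) \<Longrightarrow> (\<And>i. x i \<le> B) \<Longrightarrow> x \<in> linf_pos"
  unfolding linf_pos_def by (auto intro!: bdd_aboveI[where M=B])

lemma linf_pos_le_supnorm: "x \<in> linf_pos \<Longrightarrow> x i \<le> supnorm x"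
  unfolding linf_pos_def supnorm_def
  by (metis (mono_tags, lifting) abs_of_nonneg cSUP_upper iso_tuple_UNIV_I mem_Collect_eq)

lemma supnorm_const: "0 \<le> (r::real) \<Longrightarrow> supnorm (\<lambda>_. r) = r"
  unfolding supnorm_def by simp

lemma supnorm_tendsto_0_imp_close:
  assumes "(\<lambda>n. supnorm (\<lambda>i. X n i - y i)) \<longlonglongrightarrow> 0" "\<And>n i. \<bar>X n i - y i\<bar> \<le> C" "0 < \<epsilon>"
  obtains N where "\<And>i. \<bar>X N i - y i\<bar> < \<epsilon>"
proof -
  obtain N where "\<forall>n\<ge>N. norm (supnorm (\<lambda>i. X n i - y i) - 0) < \<epsilon>"
    using LIMSEQ_D[OF assms(1,3)] by blast
  then have "supnorm (\<lambda>i. X N i - y i) < \<epsilon>" by auto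
  moreover have "\<bar>X N i - y i\<bar> \<le> supnorm (\<lambda>i. X N i - y i)" for i
    by (rule abs_le_supnorm) (rule assms(2))
  ultimately show thesis using that le_less_trans by blast
qed

lemma Kinf_0: "Kinf g \<Longrightarrow> g 0 = 0"
  unfolding Kinf_def by auto

lemma Kinf_continuous_on: "Kinf g \<Longrightarrow> continuous_on {0..} g"
  unfolding Kinf_def by auto

lemma Kinf_unbounded: "Kinf g \<Longrightarrow> \<exists>x\<ge>0. M < g x"
  unfolding Kinf_def by auto

lemma Kinf_less: "Kinf g \<Longrightarrow> 0 \<le> x \<Longrightarrow> x < y \<Longrightarrow> g x < g y"
  unfolding Kinf_def strict_mono_on_def by auto

lemma Kinf_mono: "Kinf g \<Longrightarrow> 0 \<le> x \<Longrightarrow> x \<le> y \<Longrightarrow> g x \<le> g y"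
  using Kinf_less[of g x y] by (cases "x = y") auto

lemma Kinf_less_iff: "Kinf g \<Longrightarrow> 0 \<le> x \<Longrightarrow> 0 \<le> y \<Longrightarrow> g x < g y \<longleftrightarrow> x < y"
  using Kinf_less[of g x y] Kinf_mono[of g y x] by (auto simp: not_less[symmetric])

lemma Kinf_nonneg: "Kinf g \<Longrightarrow> 0 \<le> x \<Longrightarrow> 0 \<le> g x"
  using Kinf_mono[of g 0 x] Kinf_0[of g] by simp

lemma Kinf_pos: "Kinf g \<Longrightarrow> 0 < x \<Longrightarrow> 0 < g x"
  using Kinf_less[of g 0 x] Kinf_0[of g] by simp

lemma Kinf_divide: "Kinf g \<Longrightarrow> 0 < c \<Longrightarrow> Kinf (\<lambda>t. g t / c)"
proof -
  assume g: "Kinf g" and c: "0 < c"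
  have "\<exists>x\<ge>0. M < g x / c" for M
    using Kinf_unbounded[OF g, of "M * c"] c by (auto simp: pos_less_divide_eq)
  then show ?thesis
    using g c Kinf_less[OF g] unfolding Kinf_def strict_mono_on_def
    by (auto intro!: continuous_on_divide continuous_on_const divide_strict_right_mono)
qed

lemma Kinf_small:
  assumes g: "Kinf g" and e: "0 < e"
  shows "\<exists>d>0. \<forall>x. 0 \<le> x \<longrightarrow> x < d \<longrightarrow> g x < e"
proof -
  have "continuous (at 0 within {0..}) g"
    using Kinf_continuous_on[OF g] by (simp add: continuous_on_eq_continuous_within)
  then obtain d where "d > 0" "\<forall>x\<in>{0..}. dist x 0 < d \<longrightarrow> dist (g x) (g 0) < e"
    unfolding continuous_within_eps_delta using e by blast
  then show ?thesis using Kinf_0[OF g] by (intro exI[of _ d]) (auto simp: dist_real_def abs_less_iff)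
qed

lemma Kinf_inv_into:
  assumes g: "Kinf g" and y: "0 \<le> y"
  shows "0 \<le> inv_into {0..} g y" "g (inv_into {0..} g y) = y"
proof -
  obtain X where X: "X \<ge> 0" "y < g X" using Kinf_unbounded[OF g] by blast
  have "\<exists>x. 0 \<le> x \<and> x \<le> X \<and> g x = y"
    by (rule IVT') (use X y Kinf_0[OF g] continuous_on_subset[OF Kinf_continuous_on[OF g]] in auto)
  then have "y \<in> g ` {0..}" by auto
  then show "0 \<le> inv_into {0..} g y" "g (inv_into {0..} g y) = y"
    using inv_into_into[of y g "{0..}"] f_inv_into_f[of y g "{0..}"] by auto
qed

lemma Kinf_inv_into_bilipschitz:
  assumes g: "Kinf g" and AB: "0 \<le> A" "A \<le> B" and c: "0 < c" "c \<le> C"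
    and slope: "\<And>x y. A \<le> x \<Longrightarrow> x \<le> y \<Longrightarrow> y \<le> B \<Longrightarrow> c * (y - x) \<le> g y - g x \<and> g y - g x \<le> C * (y - x)"
    and y1: "g A \<le> y1" "y1 \<le> g B" and y2: "g A \<le> y2" "y2 \<le> g B"
  shows "(1/C) * \<bar>y1 - y2\<bar> \<le> \<bar>inv_into {0..} g y1 - inv_into {0..} g y2\<bar>
       \<and> \<bar>inv_into {0..} g y1 - inv_into {0..} g y2\<bar> \<le> (1/c) * \<bar>y1 - y2\<bar>"
proof -
  have gA: "0 \<le> g A" using Kinf_nonneg[OF g AB(1)] .
  define x1 where "x1 = inv_into {0..} g y1"
  define x2 where "x2 = inv_into {0..} g y2"
  have x1: "0 \<le> x1" "g x1 = y1" using Kinf_inv_into[OF g, of y1] y1 gA unfolding x1_def by auto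
  have x2: "0 \<le> x2" "g x2 = y2" using Kinf_inv_into[OF g, of y2] y2 gA unfolding x2_def by auto
  have in_AB: "A \<le> x \<and> x \<le> B" if "0 \<le> x" "g A \<le> g x" "g x \<le> g B" for x
    using that AB Kinf_less_iff[OF g, of x A] Kinf_less_iff[OF g, of B x] by (auto simp: not_less[symmetric])
  have ordered: "(1/C) * \<bar>g u - g v\<bar> \<le> \<bar>u - v\<bar> \<and> \<bar>u - v\<bar> \<le> (1/c) * \<bar>g u - g v\<bar>"
    if "A \<le> u" "u \<le> v" "v \<le> B" for u v
  proof -
    have s: "c * (v - u) \<le> g v - g u" "g v - g u \<le> C * (v - u)" using slope[OF that] by auto
    have "0 \<le> c * (v - u)" using c that by simp
    then have "\<bar>g u - g v\<bar> = g v - g u" "\<bar>u - v\<bar> = v - u" using s that(2) by auto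
    then show ?thesis using s c by (simp add: field_simps)
  qed
  show ?thesis
    using ordered[of x1 x2] ordered[of x2 x1] in_AB[of x1] in_AB[of x2] x1 x2 y1 y2
    unfolding x1_def[symmetric] x2_def[symmetric] by (cases "x1 \<le> x2") (auto simp: abs_minus_commute)
qed

section \<open>Chains along relations that hold near the diagonal\<close>

definition holds_near_diagonal :: "(real \<Rightarrow> real \<Rightarrow> bool) \<Rightarrow> bool" where
  "holds_near_diagonal P \<longleftrightarrow>
     (\<forall>L>0. \<exists>a b. 0 < a \<and> a < L \<and> L < b \<and> (\<forall>x y. a < x \<longrightarrow> x \<le> y \<longrightarrow> y < b \<longrightarrow> P x y))"

lemma holds_near_diagonalD:
  assumes "holds_near_diagonal P" "0 < L"
  obtains a b where "0 < a" "a < L" "L < b" "\<And>x y. a < x \<Longrightarrow> x \<le> y \<Longrightarrow> y < b \<Longrightarrow> P x y"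
proof -
  obtain a b where ab: "0 < a \<and> a < L \<and> L < b \<and> (\<forall>x y. a < x \<longrightarrow> x \<le> y \<longrightarrow> y < b \<longrightarrow> P x y)"
    using assms unfolding holds_near_diagonal_def by blast
  show thesis by (rule that[of a b]) (use ab in simp_all)
qed

lemma holds_near_diagonal_reflect:
  assumes "holds_near_diagonal P"
  shows "holds_near_diagonal (\<lambda>x y. P (1/y) (1/x))"
  unfolding holds_near_diagonal_def
proof (intro allI impI)
  fix L :: real assume L: "0 < L"
  then obtain a b where ab: "0 < a" "a < 1/L" "1/L < b" and P: "\<And>x y. a < x \<Longrightarrow> x \<le> y \<Longrightarrow> y < b \<Longrightarrow> P x y"
    using holds_near_diagonalD[OF assms, of "1/L"] by auto
  have "0 < 1/L" using L by simp
  then have b: "0 < b" using ab(3) by linarith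
  have "0 < 1/b" "1/b < L" "L < 1/a" using ab b L by (simp_all add: field_simps)
  moreover have "P (1/y) (1/x)" if "1/b < x" "x \<le> y" "y < 1/a" for x y
  proof -
    have "0 < x" using that ab by (meson divide_pos_pos less_trans zero_less_one)
    then show ?thesis using that ab by (intro P) (auto simp: field_simps)
  qed
  ultimately show "\<exists>a' b'. 0 < a' \<and> a' < L \<and> L < b' \<and> (\<forall>x y. a' < x \<longrightarrow> x \<le> y \<longrightarrow> y < b' \<longrightarrow> P (1/y) (1/x))"
    by blast
qed

definition greedy_set :: "(real \<Rightarrow> real \<Rightarrow> bool) \<Rightarrow> real \<Rightarrow> real set" where
  "greedy_set P x = {y. x < y \<and> y \<le> 2*x \<and> (\<forall>z. x \<le> z \<longrightarrow> z \<le> y \<longrightarrow> P x z)}"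

text \<open>The midpoint, because \<open>P x\<close> may fail at the supremum itself.\<close>
definition greedy_step :: "(real \<Rightarrow> real \<Rightarrow> bool) \<Rightarrow> real \<Rightarrow> real" where
  "greedy_step P x = (x + Sup (greedy_set P x)) / 2"

lemma greedy_setI:
  assumes "a < x" "x < y" "y < min (2*x) b" and P: "\<And>u v. a < u \<Longrightarrow> u \<le> v \<Longrightarrow> v < b \<Longrightarrow> P u v"
  shows "y \<in> greedy_set P x"
proof -
  have "P x z" if "x \<le> z" "z \<le> y" for z
    by (rule P) (use assms that in auto)
  then show ?thesis using assms unfolding greedy_set_def by simp
qed

lemma bdd_above_greedy_set: "bdd_above (greedy_set P x)"
  unfolding greedy_set_def by (rule bdd_aboveI[where M="2*x"]) blast

lemma greedy_step_ge:
  assumes x: "0 < x" "a < x" "x < b" and P: "\<And>u v. a < u \<Longrightarrow> u \<le> v \<Longrightarrow> v < b \<Longrightarrow> P u v"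
  shows "(x + min (2*x) b) / 2 \<le> greedy_step P x"
proof -
  have "min (2*x) b \<le> Sup (greedy_set P x)"
  proof (rule dense_le_bounded)
    show "x < min (2*x) b" using x by simp
    fix y assume "x < y" "y < min (2*x) b"
    then have "y \<in> greedy_set P x" by (rule greedy_setI[OF x(2) _ _ P])
    then show "y \<le> Sup (greedy_set P x)" by (rule cSup_upper[OF _ bdd_above_greedy_set])
  qed
  then show ?thesis unfolding greedy_step_def by simp
qed

lemma greedy_step:
  assumes P: "holds_near_diagonal P" and x: "0 < x"
  shows "x < greedy_step P x" "P x (greedy_step P x)"
proof -
  obtain a b where ab: "0 < a" "a < x" "x < b" "\<And>u v. a < u \<Longrightarrow> u \<le> v \<Longrightarrow> v < b \<Longrightarrow> P u v"
    using holds_near_diagonalD[OF P x] by blast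
  define m where "m = min (2*x) b"
  have "x < m" using x ab by (simp add: m_def)
  then have mid: "x < (x + m) / 2" "(x + m) / 2 < m" by (simp_all add: field_simps)
  note mid(1)
  also have "(x + m) / 2 \<le> greedy_step P x" unfolding m_def by (rule greedy_step_ge[OF x ab(2,3,4)])
  finally show "x < greedy_step P x" .
  then have "greedy_step P x < Sup (greedy_set P x)" unfolding greedy_step_def by simp
  moreover have "(x + m) / 2 \<in> greedy_set P x"
    unfolding m_def by (rule greedy_setI[of a x _ b P, OF ab(2) mid[unfolded m_def] ab(4)])
  ultimately obtain y where "y \<in> greedy_set P x" "greedy_step P x < y"
    using less_cSupD[of "greedy_set P x"] by blast
  then show "P x (greedy_step P x)"
    using \<open>x < greedy_step P x\<close> unfolding greedy_set_def by simp
qed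

text \<open>If the greedy chain had a finite limit \<open>L\<close>, the step from a point close to \<open>L\<close> would
  overshoot \<open>L\<close>, because \<open>P\<close> holds on a whole neighbourhood of \<open>L\<close>.\<close>
lemma greedy_chain:
  assumes P: "holds_near_diagonal P" and x0: "0 < x0"
  defines "S \<equiv> \<lambda>n. (greedy_step P ^^ n) x0"
  shows "x0 \<le> S n" "S n < S (Suc n)" "P (S n) (S (Suc n))" "\<exists>n. M < S n"
proof -
  have S_ge: "x0 \<le> S n" for n
  proof (induction n)
    case (Suc n)
    then show ?case using greedy_step(1)[OF P, of "S n"] x0 by (simp add: S_def)
  qed (simp add: S_def)
  then show "x0 \<le> S n" .
  have S_pos: "0 < S n" for n using S_ge[of n] x0 by simp
  show "S n < S (Suc n)" "P (S n) (S (Suc n))"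
    using greedy_step[OF P S_pos[of n]] by (simp_all add: S_def)
  show "\<exists>n. M < S n"
  proof (rule ccontr)
    assume "\<not> (\<exists>n. M < S n)"
    then have "S n \<le> M" for n by (simp add: not_less)
    then have bdd: "bdd_above (range S)" by (rule bdd_aboveI2)
    define L where "L = Sup (range S)"
    have S_le: "S n \<le> L" for n unfolding L_def by (rule cSup_upper[OF _ bdd]) simp
    have L: "0 < L" using S_le[of 0] S_pos[of 0] by simp
    obtain a b where ab: "0 < a" "a < L" "L < b" "\<And>u v. a < u \<Longrightarrow> u \<le> v \<Longrightarrow> v < b \<Longrightarrow> P u v"
      using holds_near_diagonalD[OF P L] by blast
    define c where "c = min (L/4) ((b - L)/2)"
    have c: "0 < c" using L ab by (simp add: c_def)
    have "max a (L - c) < Sup (range S)" using ab c by (simp add: L_def[symmetric])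
    then obtain n where n: "max a (L - c) < S n" using less_cSupD[of "range S"] by blast
    have "L - L/4 < S n" "L - (b - L)/2 < S n" using n by (auto simp: c_def)
    have "2 * L < S n + 2 * S n" using \<open>L - L/4 < S n\<close> L by linarith
    moreover have "2 * L < S n + b" using \<open>L - (b - L)/2 < S n\<close> ab(3) by (simp add: field_simps)
    ultimately have "L < (S n + min (2 * S n) b) / 2" by (simp add: min_def)
    also have "\<dots> \<le> greedy_step P (S n)"
      by (rule greedy_step_ge[OF S_pos _ _ ab(4)]) (use n S_le[of n] ab(3) in simp_all)
    also have "\<dots> = S (Suc n)" by (simp add: S_def)
    finally show False using S_le[of "Suc n"] by simp
  qed
qed

lemma bi_infinite_chain:
  assumes P: "holds_near_diagonal P"
  obtains S :: "int \<Rightarrow> real"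
  where "\<And>k. 0 < S k" "\<And>k. S k < S (k + 1)" "\<And>k. P (S k) (S (k + 1))"
    and "\<And>M. \<exists>k. M < S k" "\<And>\<epsilon>. 0 < \<epsilon> \<Longrightarrow> \<exists>k. S k < \<epsilon>"
proof -
  \<comment> \<open>The chain towards \<open>0\<close> is the reciprocal of a chain towards \<open>\<infinity>\<close> for the reflected relation.\<close>
  define P' where "P' x y = P (1/y) (1/x)" for x y
  have P': "holds_near_diagonal P'"
    using holds_near_diagonal_reflect[OF P] unfolding P'_def .
  define U where "U n = (greedy_step P ^^ n) 1" for n
  define V where "V n = (greedy_step P' ^^ n) 1" for n
  note U = greedy_chain[OF P zero_less_one, folded U_def]
  note V = greedy_chain[OF P' zero_less_one, folded V_def]
  define S where "S k = (if 0 \<le> k then U (nat k) else 1 / V (nat (-k)))" for k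
  have S_neg: "S (- int n) = 1 / V n" for n
  proof (cases n)
    case (Suc m)
    have "nat (int (Suc m)) = Suc m" by (rule nat_int)
    then show ?thesis using Suc by (simp add: S_def del: of_nat_Suc)
  qed (simp add: S_def U_def V_def)
  have V_pos: "0 < V n" for n using V(1)[of n] by simp
  show ?thesis
  proof (rule that)
    show "0 < S k" for k using U(1)[of "nat k"] V_pos[of "nat (-k)"] by (simp add: S_def)
    have "S k < S (k + 1) \<and> P (S k) (S (k + 1))" for k
    proof (cases "0 \<le> k")
      case True
      then show ?thesis using U(2,3)[of "nat k"] by (simp add: S_def nat_add_distrib)
    next
      case False
      define n where "n = nat (- k - 1)"
      have "k = - int (Suc n)" "k + 1 = - int n" using False by (simp_all add: n_def)
      then have "S k = 1 / V (Suc n)" "S (k + 1) = 1 / V n" by (simp_all only: S_neg)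
      moreover have "1 / V (Suc n) < 1 / V n"
        using V(2)[of n] V_pos[of n] by (simp add: divide_strict_left_mono)
      ultimately show ?thesis using V(3)[of n] unfolding P'_def by simp
    qed
    then show "S k < S (k + 1)" "P (S k) (S (k + 1))" for k by simp_all
    show "\<exists>k. M < S k" for M
    proof -
      obtain n where "M < U n" using U(4) by blast
      then have "M < S (int n)" by (simp add: S_def)
      then show ?thesis by blast
    qed
    fix \<epsilon> :: real assume "0 < \<epsilon>"
    obtain n where "1/\<epsilon> < V n" using V(4) by blast
    then have "S (- int n) < \<epsilon>" using \<open>0 < \<epsilon>\<close> V_pos[of n] by (simp add: S_neg field_simps)
    then show "\<exists>k. S k < \<epsilon>" by blast
  qed
qed

section \<open>Piecewise linear interpolation at the dyadic nodes\<close>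

lemma strict_mono_int_iff_step: "strict_mono (f :: int \<Rightarrow> 'a::order) \<longleftrightarrow> (\<forall>k. f k < f (k + 1))"
proof
  assume step: "\<forall>k. f k < f (k + 1)"
  show "strict_mono f"
  proof (rule strict_monoI)
    fix k l :: int assume "k < l"
    then show "f k < f l"
      by (induction l rule: int_gr_induct) (use step less_trans in blast)+
  qed
qed (simp add: strict_mono_def)

definition node :: "int \<Rightarrow> real" where
  "node k = 2 powr real_of_int k"

lemma node_pos: "0 < node k"
  unfolding node_def by simp

lemma node_Suc: "node (k + 1) = 2 * node k"
  unfolding node_def by (simp add: powr_add)

lemma node_less_iff: "node k < node l \<longleftrightarrow> k < l"
  unfolding node_def by simp

lemma node_le_iff: "node k \<le> node l \<longleftrightarrow> k \<le> l"
  unfolding node_def by simp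

lemma floor_log_node: "node k \<le> r \<Longrightarrow> r < node (k + 1) \<Longrightarrow> \<lfloor>log 2 r\<rfloor> = k"
  using floor_log_eq_powr_iff[of r 2 k] node_pos[of k] unfolding node_def by simp

lemma node_interval:
  assumes "0 < r"
  obtains k where "node k \<le> r" "r < node (k + 1)"
proof -
  have "2 powr \<lfloor>log 2 r\<rfloor> \<le> r \<and> r < 2 powr (\<lfloor>log 2 r\<rfloor> + 1)"
    using floor_log_eq_powr_iff[of r 2 "\<lfloor>log 2 r\<rfloor>"] assms by simp
  then show thesis using that[of "\<lfloor>log 2 r\<rfloor>"] by (simp add: node_def)
qed

definition pwlin :: "(int \<Rightarrow> real) \<Rightarrow> real \<Rightarrow> real" where
  "pwlin q r = (if r \<le> 0 then 0 else
     q \<lfloor>log 2 r\<rfloor> + (r / node \<lfloor>log 2 r\<rfloor> - 1) * (q (\<lfloor>log 2 r\<rfloor> + 1) - q \<lfloor>log 2 r\<rfloor>))"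

lemma pwlin_0 [simp]: "pwlin q 0 = 0"
  unfolding pwlin_def by simp

lemma pwlin_on_piece:
  assumes "node k \<le> r" "r \<le> node (k + 1)"
  shows "pwlin q r = q k + (r / node k - 1) * (q (k + 1) - q k)"
proof (cases "r < node (k + 1)")
  case True
  then show ?thesis
    using assms floor_log_node[of k r] node_pos[of k] unfolding pwlin_def by simp
next
  case False
  then have r: "r = node (k + 1)" using assms by simp
  have "\<lfloor>log 2 r\<rfloor> = k + 1"
    using r floor_log_node[of "k + 1" r] node_less_iff[of "k + 1" "k + 1 + 1"] by simp
  then show ?thesis
    using r node_pos[of k] node_pos[of "k + 1"] node_Suc[of k] unfolding pwlin_def by simp
qed

lemma pwlin_node [simp]: "pwlin q (node k) = q k"
  using pwlin_on_piece[of k "node k" q] node_pos[of k] node_Suc[of k] by simp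

lemma pwlin_diff_on_piece:
  assumes "node k \<le> x" "x \<le> y" "y \<le> node (k + 1)"
  shows "pwlin q y - pwlin q x = (y - x) * ((q (k + 1) - q k) / node k)"
  using pwlin_on_piece[of k x q] pwlin_on_piece[of k y q] assms node_pos[of k]
  by (simp add: field_simps)

lemma pwlin_slope_bounds_on_piece:
  assumes "c * node k \<le> q (k + 1) - q k" "q (k + 1) - q k \<le> C * node k"
    and xy: "node k \<le> x" "x \<le> y" "y \<le> node (k + 1)"
  shows "c * (y - x) \<le> pwlin q y - pwlin q x \<and> pwlin q y - pwlin q x \<le> C * (y - x)"
proof -
  define sl where "sl = (q (k + 1) - q k) / node k"
  have "c \<le> sl" "sl \<le> C" using assms(1,2) node_pos[of k] by (simp_all add: sl_def field_simps)
  moreover have "0 \<le> y - x" using xy by simp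
  ultimately have "c * (y - x) \<le> sl * (y - x)" "sl * (y - x) \<le> C * (y - x)"
    by (simp_all add: mult_right_mono)
  moreover have "pwlin q y - pwlin q x = sl * (y - x)"
    unfolding pwlin_diff_on_piece[OF xy] sl_def by (simp only: mult.commute)
  ultimately show ?thesis by simp
qed

lemma pwlin_slope_bounds:
  assumes "a \<le> b"
    and slope: "\<And>k. a \<le> k \<Longrightarrow> k < b \<Longrightarrow> c * node k \<le> q (k + 1) - q k \<and> q (k + 1) - q k \<le> C * node k"
    and "node a \<le> x" "x \<le> y" "y \<le> node b"
  shows "c * (y - x) \<le> pwlin q y - pwlin q x \<and> pwlin q y - pwlin q x \<le> C * (y - x)"
  using assms(1,3-5) slope
proof (induction b arbitrary: x y rule: int_ge_induct)
  case base
  then have "x = y" by linarith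
  then show ?case by simp
next
  case (step b)
  have piece: "c * (y - x) \<le> pwlin q y - pwlin q x \<and> pwlin q y - pwlin q x \<le> C * (y - x)"
    if "node b \<le> x" "x \<le> y" "y \<le> node (b + 1)" for x y
    using pwlin_slope_bounds_on_piece[OF _ _ that] step.prems(4)[of b] step.hyps by auto
  show ?case
  proof (cases "y \<le> node b")
    case True
    then show ?thesis using step by simp
  next
    case y: False
    show ?thesis
    proof (cases "node b \<le> x")
      case True
      then show ?thesis using piece step.prems y by simp
    next
      case False
      have "c * (node b - x) \<le> pwlin q (node b) - pwlin q x \<and> pwlin q (node b) - pwlin q x \<le> C * (node b - x)"
        by (rule step.IH) (use step.prems False in auto)
      moreover have "c * (y - node b) \<le> pwlin q y - pwlin q (node b) \<and> pwlin q y - pwlin q (node b) \<le> C * (y - node b)"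
        using piece[of "node b" y] step.prems y by simp
      ultimately show ?thesis by (simp add: algebra_simps)
    qed
  qed
qed

locale Kinf_sequence =
  fixes q :: "int \<Rightarrow> real"
  assumes strict_mono: "strict_mono q" and pos: "\<And>k. 0 < q k"
    and to_0: "\<And>e. 0 < e \<Longrightarrow> \<exists>k. q k < e" and to_infinity: "\<And>M. \<exists>k. M < q k"
begin

lemma pwlin_between:
  assumes "node k \<le> r" "r \<le> node (k + 1)"
  shows "q k \<le> pwlin q r" "pwlin q r \<le> q (k + 1)"
proof -
  have t: "0 \<le> r / node k - 1" "r / node k - 1 \<le> 1"
    using assms node_pos[of k] node_Suc[of k] by (auto simp: field_simps)
  have "0 \<le> q (k + 1) - q k" using strict_monoD[OF strict_mono, of k "k + 1"] by simp
  then have "0 \<le> (r / node k - 1) * (q (k + 1) - q k)" "(r / node k - 1) * (q (k + 1) - q k) \<le> q (k + 1) - q k"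
    using t mult_right_mono[OF t(2)] by auto
  then show "q k \<le> pwlin q r" "pwlin q r \<le> q (k + 1)"
    using pwlin_on_piece[OF assms, of q] by simp_all
qed

lemma pwlin_pos: "0 < r \<Longrightarrow> 0 < pwlin q r"
  by (metis node_interval pwlin_between(1) pos less_eq_real_def order_less_le_trans)

lemma pwlin_bilipschitz_on_nodes:
  assumes "a \<le> b"
  obtains c C where "0 < c" "c \<le> C"
    "\<And>x y. node a \<le> x \<Longrightarrow> x \<le> y \<Longrightarrow> y \<le> node b \<Longrightarrow> c * (y - x) \<le> pwlin q y - pwlin q x \<and> pwlin q y - pwlin q x \<le> C * (y - x)"
proof -
  define slope where "slope k = (q (k + 1) - q k) / node k" for k
  define c where "c = Min (slope ` {a..b})"
  define C where "C = Max (slope ` {a..b})"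
  have fin: "finite (slope ` {a..b})" "slope ` {a..b} \<noteq> {}" using assms by auto
  have "0 < slope k" for k
    using strict_monoD[OF strict_mono, of k "k + 1"] node_pos[of k] by (simp add: slope_def)
  then have "0 < c" unfolding c_def using fin by (auto simp: Min_gr_iff)
  moreover have "c \<le> slope a" "slope a \<le> C" unfolding c_def C_def using fin assms by auto
  then have "c \<le> C" by simp
  moreover have "c * node k \<le> q (k + 1) - q k \<and> q (k + 1) - q k \<le> C * node k" if "a \<le> k" "k < b" for k
  proof -
    have "c \<le> slope k" "slope k \<le> C" unfolding c_def C_def using fin that by auto
    then show ?thesis unfolding slope_def using node_pos[of k] by (simp add: field_simps)
  qed
  ultimately show thesis using that pwlin_slope_bounds[OF assms, of c q C] by blast
qed

lemma pwlin_less: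
  assumes "0 \<le> x" "x < y"
  shows "pwlin q x < pwlin q y"
proof (cases "x = 0")
  case True
  then show ?thesis using pwlin_pos[of y] assms by simp
next
  case False
  then have "0 < x" using assms by simp
  then obtain a where a: "node a \<le> x" by (rule node_interval)
  obtain b where b: "y < node (b + 1)" using node_interval[of y] assms \<open>0 < x\<close> by auto
  have "node a < node (b + 1)" using a b assms by linarith
  then have "a \<le> b + 1" by (simp add: node_less_iff)
  then obtain c C where "0 < c" "c \<le> C" and slope:
    "\<And>x y. node a \<le> x \<Longrightarrow> x \<le> y \<Longrightarrow> y \<le> node (b + 1) \<Longrightarrow> c * (y - x) \<le> pwlin q y - pwlin q x \<and> pwlin q y - pwlin q x \<le> C * (y - x)"
    by (rule pwlin_bilipschitz_on_nodes) blast
  have "c * (y - x) \<le> pwlin q y - pwlin q x" using slope[of x y] a b assms by simp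
  moreover have "0 < c * (y - x)" using \<open>0 < c\<close> assms by simp
  ultimately show ?thesis by simp
qed

lemma pwlin_mono: "0 \<le> x \<Longrightarrow> x \<le> y \<Longrightarrow> pwlin q x \<le> pwlin q y"
  using pwlin_less[of x y] by (cases "x = y") auto

lemma pwlin_continuous_at_0: "continuous (at 0 within {0..}) (pwlin q)"
  unfolding continuous_within_eps_delta
proof (intro allI impI)
  fix e :: real assume "0 < e"
  then obtain k where k: "q k < e" using to_0 by blast
  have "dist (pwlin q x) (pwlin q 0) < e" if "x \<in> {0..}" "dist x 0 < node k" for x
    using pwlin_mono[of x "node k"] pwlin_mono[of 0 x] that k by (simp add: dist_real_def)
  then show "\<exists>d>0. \<forall>x\<in>{0..}. dist x 0 < d \<longrightarrow> dist (pwlin q x) (pwlin q 0) < e"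
    using node_pos[of k] by blast
qed

lemma pwlin_isCont:
  assumes x: "0 < x"
  shows "isCont (pwlin q) x"
proof -
  obtain k where k: "node k \<le> x" "x < node (k + 1)" using node_interval[OF x] by blast
  then have inner: "x \<in> {node (k - 1)<..<node (k + 1)}"
    using node_less_iff[of "k - 1" k] by simp
  have "k - 1 \<le> k + 1" by simp
  then obtain c C where C: "0 < c" "c \<le> C"
    "\<And>x y. node (k - 1) \<le> x \<Longrightarrow> x \<le> y \<Longrightarrow> y \<le> node (k + 1) \<Longrightarrow> c * (y - x) \<le> pwlin q y - pwlin q x \<and> pwlin q y - pwlin q x \<le> C * (y - x)"
    by (rule pwlin_bilipschitz_on_nodes) blast
  have bound: "\<bar>pwlin q v - pwlin q u\<bar> \<le> C * (v - u)"
    if "u \<le> v" "node (k - 1) \<le> u" "v \<le> node (k + 1)" for u v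
    using C(3)[OF that(2,1,3)] pwlin_mono[of u v] node_pos[of "k - 1"] that by simp
  have "C-lipschitz_on {node (k - 1)..node (k + 1)} (pwlin q)"
  proof (rule lipschitz_onI)
    fix u v assume uv: "u \<in> {node (k - 1)..node (k + 1)}" "v \<in> {node (k - 1)..node (k + 1)}"
    show "dist (pwlin q u) (pwlin q v) \<le> C * dist u v"
    proof (cases "u \<le> v")
      case True
      then show ?thesis using bound[of u v] uv by (simp add: dist_real_def abs_minus_commute)
    next
      case False
      then show ?thesis using bound[of v u] uv by (simp add: dist_real_def)
    qed
  qed (use C in simp)
  then have "continuous_on {node (k - 1)..node (k + 1)} (pwlin q)"
    by (rule lipschitz_on_continuous_on)
  then show ?thesis
    using inner by (intro continuous_on_interior[of "{node (k - 1)..node (k + 1)}"]) auto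
qed

lemma pwlin_continuous_on: "continuous_on {0..} (pwlin q)"
  unfolding continuous_on_eq_continuous_within
  using pwlin_continuous_at_0 pwlin_isCont continuous_at_imp_continuous_at_within
  by (metis atLeast_iff less_eq_real_def)

lemma pwlin_Kinf: "Kinf (pwlin q)"
  unfolding Kinf_def
proof (intro conjI allI)
  show "continuous_on {0..} (pwlin q)" by (rule pwlin_continuous_on)
  show "strict_mono_on {0..} (pwlin q)" by (auto intro: strict_mono_onI pwlin_less)
  show "pwlin q 0 = 0" by simp
  fix M
  obtain k where "M < q k" using to_infinity by blast
  then show "\<exists>x\<ge>0. M < pwlin q x" using node_pos[of k] by (metis less_eq_real_def pwlin_node)
qed

end

section \<open>Gain operators\<close>

lemma uniformly_equicontinuous_on_interval:
  fixes F :: "(real \<Rightarrow> real) set"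
  assumes equi: "\<And>r \<epsilon>. 0 \<le> r \<Longrightarrow> 0 < \<epsilon> \<Longrightarrow> \<exists>\<delta>>0. \<forall>f\<in>F. \<forall>r'\<ge>0. \<bar>r' - r\<bar> < \<delta> \<longrightarrow> \<bar>f r' - f r\<bar> < \<epsilon>"
    and e: "0 < \<epsilon>"
  shows "\<exists>\<delta>>0. \<forall>f\<in>F. \<forall>x\<in>{0..B}. \<forall>y\<in>{0..B}. \<bar>x - y\<bar> < \<delta> \<longrightarrow> \<bar>f x - f y\<bar> < \<epsilon>"
proof -
  obtain d where d: "\<And>r. r \<in> {0..B} \<Longrightarrow> d r > 0 \<and> (\<forall>f\<in>F. \<forall>r'\<ge>0. \<bar>r' - r\<bar> < d r \<longrightarrow> \<bar>f r' - f r\<bar> < \<epsilon>/2)"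
    using equi[of _ "\<epsilon>/2"] e by (metis atLeastAtMost_iff half_gt_zero)
  have cover: "{0..B} \<subseteq> \<Union>((\<lambda>r. ball r (d r)) ` {0..B})"
    using d by force
  obtain \<delta> where \<delta>: "0 < \<delta>" "\<And>x. x \<in> {0..B} \<Longrightarrow> \<exists>G \<in> (\<lambda>r. ball r (d r)) ` {0..B}. ball x \<delta> \<subseteq> G"
    using Heine_Borel_lemma[OF compact_Icc cover] by blast
  show ?thesis
  proof (intro exI[of _ \<delta>] conjI ballI impI)
    show "0 < \<delta>" by (rule \<delta>(1))
  next
    fix f x y assume f: "f \<in> F" and x: "x \<in> {0..B}" and y: "y \<in> {0..B}" and xy: "\<bar>x - y\<bar> < \<delta>"
    obtain r where r: "r \<in> {0..B}" and sub: "ball x \<delta> \<subseteq> ball r (d r)"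
      using \<delta>(2)[OF x] by auto
    have "x \<in> ball r (d r)" using sub centre_in_ball[of x \<delta>] \<delta>(1) by blast
    moreover have "y \<in> ball r (d r)" using sub xy by (auto simp: dist_real_def)
    ultimately have "\<bar>x - r\<bar> < d r" "\<bar>y - r\<bar> < d r"
      by (auto simp: dist_real_def abs_minus_commute)
    then have "\<bar>f x - f r\<bar> < \<epsilon>/2" "\<bar>f y - f r\<bar> < \<epsilon>/2"
      using d[OF r] f x y by auto
    then show "\<bar>f x - f y\<bar> < \<epsilon>" by linarith
  qed
qed

locale gain =
  fixes Ii :: "'i \<Rightarrow> 'i set"
    and gam :: "'i \<Rightarrow> 'i \<Rightarrow> real \<Rightarrow> real"
    and mu :: "'i \<Rightarrow> ('i \<Rightarrow> real) \<Rightarrow> ereal"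
  assumes gain_operator: "gain_operator Ii gam mu"
begin

abbreviation \<Gamma> :: "('i \<Rightarrow> real) \<Rightarrow> 'i \<Rightarrow> real" where
  "\<Gamma> \<equiv> Gam Ii gam mu"

lemma finite_neighbours: "finite (Ii i)"
  using gain_operator[unfolded gain_operator_def, THEN conjunct1] by simp

lemma gam_Kinf: "j \<in> Ii i \<Longrightarrow> Kinf (gam i j)"
  using gain_operator[unfolded gain_operator_def, THEN conjunct2, THEN conjunct1] by simp

lemma gam_equicontinuous:
  assumes "0 \<le> r" "0 < \<epsilon>"
  shows "\<exists>\<delta>>0. \<forall>f\<in>{gam i j |i j. j \<in> Ii i}. \<forall>r'\<ge>0. \<bar>r' - r\<bar> < \<delta> \<longrightarrow> \<bar>f r' - f r\<bar> < \<epsilon>"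
proof -
  obtain \<delta> where "\<delta> > 0" "\<forall>i. \<forall>j\<in>Ii i. \<forall>r'\<ge>0. \<bar>r' - r\<bar> < \<delta> \<longrightarrow> \<bar>gam i j r' - gam i j r\<bar> < \<epsilon>"
    using gain_operator[unfolded gain_operator_def, THEN conjunct2, THEN conjunct2, THEN conjunct1] assms
    by blast
  then show ?thesis by blast
qed

lemma mu_nonneg: "s \<in> linf_pos \<Longrightarrow> 0 \<le> mu i s"
  using gain_operator[unfolded gain_operator_def, THEN conjunct2, THEN conjunct2, THEN conjunct2,
      THEN conjunct1] by simp

lemma mu_zero: "mu i (\<lambda>_. 0) = 0"
  using gain_operator[unfolded gain_operator_def, THEN conjunct2, THEN conjunct2, THEN conjunct2,
      THEN conjunct2, THEN conjunct1] by blast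

lemma mu_lower_bound:
  obtains \<xi> where "Kinf \<xi>" "\<And>i s. s \<in> linf_pos \<Longrightarrow> ereal (\<xi> (supnorm s)) \<le> mu i s"
  using gain_operator[unfolded gain_operator_def, THEN conjunct2, THEN conjunct2, THEN conjunct2,
      THEN conjunct2, THEN conjunct1] by blast

lemma mu_mono: "s \<in> linf_pos \<Longrightarrow> t \<in> linf_pos \<Longrightarrow> s \<le> t \<Longrightarrow> mu i s \<le> mu i t"
  using gain_operator[unfolded gain_operator_def, THEN conjunct2, THEN conjunct2, THEN conjunct2,
      THEN conjunct2, THEN conjunct2, THEN conjunct1] by (simp add: le_fun_def)

lemma mu_finite: "finite J \<Longrightarrow> s \<in> linf_pos \<Longrightarrow> (\<And>k. k \<notin> J \<Longrightarrow> s k = 0) \<Longrightarrow> mu i s \<noteq> \<infinity>"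
  using gain_operator[unfolded gain_operator_def, THEN conjunct2, THEN conjunct2, THEN conjunct2,
      THEN conjunct2, THEN conjunct2, THEN conjunct2, THEN conjunct1] by simp

lemma mu_restr_uniformly_continuous:
  assumes "A \<subseteq> linf_pos" "\<And>s. s \<in> A \<Longrightarrow> supnorm s \<le> R" "0 < \<epsilon>"
  shows "\<exists>\<delta>>0. \<forall>s0\<in>A. \<forall>s\<in>linf_pos. supnorm (\<lambda>k. s k - s0 k) \<le> \<delta> \<longrightarrow>
      (\<forall>i. \<bar>real_of_ereal (mu i (restr s (Ii i))) - real_of_ereal (mu i (restr s0 (Ii i)))\<bar> \<le> \<epsilon>)"
proof -
  have "\<exists>R. \<forall>s\<in>A. supnorm s \<le> R" using assms(2) by blast
  then show ?thesis
    using gain_operator[unfolded gain_operator_def, THEN conjunct2, THEN conjunct2, THEN conjunct2,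
      THEN conjunct2, THEN conjunct2, THEN conjunct2, THEN conjunct2] assms(1,3) by blast
qed

definition gain_vec :: "'i \<Rightarrow> ('i \<Rightarrow> real) \<Rightarrow> 'i \<Rightarrow> real" where
  "gain_vec i x = (\<lambda>j. if j \<in> Ii i then gam i j (x j) else 0)"

definition nonneg :: "('i \<Rightarrow> real) \<Rightarrow> bool" where
  "nonneg x \<longleftrightarrow> (\<forall>i. 0 \<le> x i)"

lemma nonneg_const: "0 \<le> r \<Longrightarrow> nonneg (\<lambda>_. r)"
  by (simp add: nonneg_def)

lemma nonneg_le: "nonneg x \<Longrightarrow> x \<le> y \<Longrightarrow> nonneg y"
  unfolding nonneg_def le_fun_def by (meson order_trans)

lemma Gam_eq: "\<Gamma> x i = real_of_ereal (mu i (gain_vec i x))"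
  unfolding Gam_def gain_vec_def by simp

lemma gain_vec_nonneg: "nonneg x \<Longrightarrow> 0 \<le> gain_vec i x j"
  unfolding gain_vec_def nonneg_def using gam_Kinf Kinf_nonneg by auto

lemma gain_vec_in_linf_pos:
  assumes "nonneg x"
  shows "gain_vec i x \<in> linf_pos"
proof (rule linf_posI)
  show "0 \<le> gain_vec i x j" for j by (rule gain_vec_nonneg[OF assms])
  have nn: "0 \<le> gain_vec i x k" for k by (rule gain_vec_nonneg[OF assms])
  show "gain_vec i x j \<le> (\<Sum>k\<in>Ii i. gain_vec i x k)" for j
  proof (cases "j \<in> Ii i")
    case True
    then show ?thesis using nn finite_neighbours by (intro member_le_sum) auto
  next
    case False
    have "0 \<le> gam i k (x k)" if "k \<in> Ii i" for k using nn[of k] that by (simp add: gain_vec_def)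
    then show ?thesis using False by (simp add: gain_vec_def sum_nonneg)
  qed
qed

lemma mu_gain_vec: "nonneg x \<Longrightarrow> mu i (gain_vec i x) = ereal (\<Gamma> x i)"
proof -
  assume x: "nonneg x"
  have "mu i (gain_vec i x) \<noteq> \<infinity>"
    by (rule mu_finite[OF finite_neighbours[of i] gain_vec_in_linf_pos[OF x]]) (simp add: gain_vec_def)
  moreover have "0 \<le> mu i (gain_vec i x)" by (rule mu_nonneg[OF gain_vec_in_linf_pos[OF x]])
  ultimately show ?thesis by (cases "mu i (gain_vec i x)") (auto simp: Gam_eq)
qed

lemma Gam_nonneg: "nonneg x \<Longrightarrow> 0 \<le> \<Gamma> x i"
  using mu_nonneg[of "gain_vec i x" i] gain_vec_in_linf_pos[of x i] mu_gain_vec[of x i] by simp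

lemma Gam_mono:
  assumes x: "nonneg x" and xy: "x \<le> y"
  shows "\<Gamma> x i \<le> \<Gamma> y i"
proof -
  have y: "nonneg y" by (rule nonneg_le[OF x xy])
  have "gain_vec i x \<le> gain_vec i y"
    using x xy gam_Kinf Kinf_mono unfolding gain_vec_def nonneg_def le_fun_def by auto
  then have "mu i (gain_vec i x) \<le> mu i (gain_vec i y)"
    by (intro mu_mono gain_vec_in_linf_pos x y)
  then show ?thesis using mu_gain_vec[OF x] mu_gain_vec[OF y] by simp
qed

lemma Gam_zero: "\<Gamma> (\<lambda>_. 0) i = 0"
proof -
  have "gain_vec i (\<lambda>_. 0) = (\<lambda>_. 0)" unfolding gain_vec_def using gam_Kinf Kinf_0 by auto
  then show ?thesis by (simp add: Gam_eq mu_zero)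
qed

lemma Gam_rho_eq: "Gam_rho Ii gam mu \<kappa> x i = \<Gamma> x i + \<kappa> (\<Gamma> x i)"
  unfolding Gam_rho_def by simp

lemma Gam_rho_nonneg: "Kinf \<kappa> \<Longrightarrow> nonneg x \<Longrightarrow> 0 \<le> Gam_rho Ii gam mu \<kappa> x i"
  using Gam_nonneg[of x i] Kinf_nonneg[of \<kappa> "\<Gamma> x i"] by (simp add: Gam_rho_eq)

lemma Gam_rho_mono:
  "Kinf \<kappa> \<Longrightarrow> nonneg x \<Longrightarrow> x \<le> y \<Longrightarrow> Gam_rho Ii gam mu \<kappa> x i \<le> Gam_rho Ii gam mu \<kappa> y i"
  unfolding Gam_rho_eq using Gam_mono Gam_nonneg Kinf_mono by (meson add_mono)

lemma Gam_le_Gam_rho: "Kinf \<kappa> \<Longrightarrow> nonneg x \<Longrightarrow> \<Gamma> x i \<le> Gam_rho Ii gam mu \<kappa> x i"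
  unfolding Gam_rho_eq using Gam_nonneg Kinf_nonneg by simp

lemma gam_bounded:
  assumes B: "0 \<le> B" and K: "\<And>i. \<Gamma> (\<lambda>_. B) i \<le> K"
  obtains T where "\<And>i j x. j \<in> Ii i \<Longrightarrow> 0 \<le> x \<Longrightarrow> x \<le> B \<Longrightarrow> gam i j x \<le> T"
proof -
  obtain \<xi> where \<xi>: "Kinf \<xi>" "\<And>i s. s \<in> linf_pos \<Longrightarrow> ereal (\<xi> (supnorm s)) \<le> mu i s"
    by (rule mu_lower_bound) blast
  obtain T where T: "T \<ge> 0" "K < \<xi> T" using Kinf_unbounded[OF \<xi>(1)] by blast
  have "gam i j x \<le> T" if j: "j \<in> Ii i" and x: "0 \<le> x" "x \<le> B" for i j x
  proof -
    have c: "nonneg (\<lambda>_. B)" by (rule nonneg_const[OF B])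
    have "gam i j x \<le> gam i j B" using Kinf_mono[OF gam_Kinf[OF j]] x by auto
    also have "\<dots> \<le> supnorm (gain_vec i (\<lambda>_. B))"
      using linf_pos_le_supnorm[OF gain_vec_in_linf_pos[OF c], of i j] j by (simp add: gain_vec_def)
    also have "\<dots> < T"
    proof -
      have "ereal (\<xi> (supnorm (gain_vec i (\<lambda>_. B)))) \<le> ereal (\<Gamma> (\<lambda>_. B) i)"
        using \<xi>(2)[of "gain_vec i (\<lambda>_. B)" i] gain_vec_in_linf_pos[OF c, of i] mu_gain_vec[OF c, of i]
        by simp
      then have "\<xi> (supnorm (gain_vec i (\<lambda>_. B))) < \<xi> T" using K[of i] T by simp
      moreover have "0 \<le> supnorm (gain_vec i (\<lambda>_. B))"
        using linf_pos_le_supnorm[OF gain_vec_in_linf_pos[OF c], of i j] gain_vec_nonneg[OF c, of i j] by linarith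
      ultimately show ?thesis using Kinf_less_iff[OF \<xi>(1)] T(1) by blast
    qed
    finally show ?thesis by simp
  qed
  then show thesis by (rule that)
qed

lemma gain_vec_uniformly_continuous:
  assumes "0 < \<eta>"
  obtains \<delta> where "0 < \<delta>" "\<And>x y i. nonneg x \<Longrightarrow> nonneg y \<Longrightarrow> x \<le> (\<lambda>_. B) \<Longrightarrow> y \<le> (\<lambda>_. B) \<Longrightarrow>
     (\<And>j. \<bar>x j - y j\<bar> < \<delta>) \<Longrightarrow> supnorm (\<lambda>k. gain_vec i x k - gain_vec i y k) \<le> \<eta>"
proof -
  obtain \<delta> where \<delta>: "0 < \<delta>" "\<forall>f\<in>{gam i j |i j. j \<in> Ii i}. \<forall>x\<in>{0..B}. \<forall>y\<in>{0..B}.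
      \<bar>x - y\<bar> < \<delta> \<longrightarrow> \<bar>f x - f y\<bar> < \<eta>"
    using uniformly_equicontinuous_on_interval[OF gam_equicontinuous assms, of B] by blast
  have "supnorm (\<lambda>k. gain_vec i x k - gain_vec i y k) \<le> \<eta>"
    if x: "nonneg x" "x \<le> (\<lambda>_. B)" and y: "nonneg y" "y \<le> (\<lambda>_. B)" and xy: "\<And>j. \<bar>x j - y j\<bar> < \<delta>"
    for x y i
  proof (rule supnorm_le)
    fix k
    show "\<bar>gain_vec i x k - gain_vec i y k\<bar> \<le> \<eta>"
    proof (cases "k \<in> Ii i")
      case True
      then have "gam i k \<in> {gam i j |i j. j \<in> Ii i}" by blast
      then have "\<bar>gam i k (x k) - gam i k (y k)\<bar> < \<eta>"
        using \<delta>(2) x y xy[of k] by (simp add: nonneg_def le_fun_def)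
      then show ?thesis using True by (simp add: gain_vec_def)
    qed (use assms in \<open>simp add: gain_vec_def\<close>)
  qed
  then show thesis using that \<delta>(1) by blast
qed

lemma Gam_uniformly_continuous:
  assumes B: "0 \<le> B" and K: "\<And>i. \<Gamma> (\<lambda>_. B) i \<le> K" and e: "0 < \<epsilon>"
  obtains \<delta> where "0 < \<delta>" "\<And>x y i. nonneg x \<Longrightarrow> nonneg y \<Longrightarrow> x \<le> (\<lambda>_. B) \<Longrightarrow> y \<le> (\<lambda>_. B) \<Longrightarrow>
     (\<And>j. \<bar>x j - y j\<bar> < \<delta>) \<Longrightarrow> \<bar>\<Gamma> x i - \<Gamma> y i\<bar> \<le> \<epsilon>"
proof -
  obtain T where T: "\<And>i j x. j \<in> Ii i \<Longrightarrow> 0 \<le> x \<Longrightarrow> x \<le> B \<Longrightarrow> gam i j x \<le> T"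
    using gam_bounded[OF B K] by blast
  define A where "A = {gain_vec i y | i y. nonneg y \<and> y \<le> (\<lambda>_. B)}"
  have A: "A \<subseteq> linf_pos" unfolding A_def using gain_vec_in_linf_pos by blast
  have A_bounded: "supnorm s \<le> max T 0" if "s \<in> A" for s
  proof (rule supnorm_le)
    obtain i y where "s = gain_vec i y" "nonneg y" "y \<le> (\<lambda>_. B)" using \<open>s \<in> A\<close> unfolding A_def by blast
    then show "\<bar>s j\<bar> \<le> max T 0" for j
      using T[of j i "y j"] gain_vec_nonneg[of y i j] by (auto simp: gain_vec_def nonneg_def le_fun_def)
  qed
  obtain \<eta> where \<eta>: "0 < \<eta>" "\<forall>s0\<in>A. \<forall>s\<in>linf_pos. supnorm (\<lambda>k. s k - s0 k) \<le> \<eta> \<longrightarrow>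
      (\<forall>i. \<bar>real_of_ereal (mu i (restr s (Ii i))) - real_of_ereal (mu i (restr s0 (Ii i)))\<bar> \<le> \<epsilon>)"
    using mu_restr_uniformly_continuous[OF A A_bounded e] by blast
  obtain \<delta> where \<delta>: "0 < \<delta>" "\<And>x y i. nonneg x \<Longrightarrow> nonneg y \<Longrightarrow> x \<le> (\<lambda>_. B) \<Longrightarrow> y \<le> (\<lambda>_. B) \<Longrightarrow>
     (\<And>j. \<bar>x j - y j\<bar> < \<delta>) \<Longrightarrow> supnorm (\<lambda>k. gain_vec i x k - gain_vec i y k) \<le> \<eta>"
    using gain_vec_uniformly_continuous[OF \<eta>(1)] by blast
  have restr_gain_vec: "restr (gain_vec i z) (Ii i) = gain_vec i z" for i z
    unfolding restr_def gain_vec_def by auto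
  show thesis
  proof (rule that[OF \<delta>(1)])
    fix x y i assume x: "nonneg x" "x \<le> (\<lambda>_. B)" and y: "nonneg y" "y \<le> (\<lambda>_. B)"
      and xy: "\<And>j. \<bar>x j - y j\<bar> < \<delta>"
    have "gain_vec i y \<in> A" unfolding A_def using y by blast
    then show "\<bar>\<Gamma> x i - \<Gamma> y i\<bar> \<le> \<epsilon>"
      using \<eta>(2)[rule_format, of "gain_vec i y" "gain_vec i x" i] \<delta>(2)[OF x(1) y(1) x(2) y(2) xy]
        gain_vec_in_linf_pos[OF x(1)]
      by (simp add: Gam_eq restr_gain_vec)
  qed
qed

lemma Gam_rho_uniformly_continuous:
  assumes \<kappa>: "Kinf \<kappa>" and B: "0 \<le> B" and K: "\<And>i. \<Gamma> (\<lambda>_. B) i \<le> K" and e: "0 < \<epsilon>"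
  obtains \<delta> where "0 < \<delta>" "\<And>x y i. nonneg x \<Longrightarrow> nonneg y \<Longrightarrow> x \<le> (\<lambda>_. B) \<Longrightarrow> y \<le> (\<lambda>_. B) \<Longrightarrow>
     (\<And>j. \<bar>x j - y j\<bar> < \<delta>) \<Longrightarrow> \<bar>Gam_rho Ii gam mu \<kappa> x i - Gam_rho Ii gam mu \<kappa> y i\<bar> \<le> \<epsilon>"
proof -
  have "uniformly_continuous_on {0..K} \<kappa>"
    by (rule compact_uniformly_continuous[OF continuous_on_subset[OF Kinf_continuous_on[OF \<kappa>]]]) auto
  then obtain d where d: "0 < d" "\<And>u v. u \<in> {0..K} \<Longrightarrow> v \<in> {0..K} \<Longrightarrow> dist v u < d \<Longrightarrow> dist (\<kappa> v) (\<kappa> u) < \<epsilon>/2"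
    unfolding uniformly_continuous_on_def using e by (meson half_gt_zero)
  obtain \<delta> where \<delta>: "0 < \<delta>" "\<And>x y i. nonneg x \<Longrightarrow> nonneg y \<Longrightarrow> x \<le> (\<lambda>_. B) \<Longrightarrow> y \<le> (\<lambda>_. B) \<Longrightarrow>
     (\<And>j. \<bar>x j - y j\<bar> < \<delta>) \<Longrightarrow> \<bar>\<Gamma> x i - \<Gamma> y i\<bar> \<le> min (\<epsilon>/2) (d/2)"
    using Gam_uniformly_continuous[OF B K, of "min (\<epsilon>/2) (d/2)"] e d(1) by auto
  show thesis
  proof (rule that[OF \<delta>(1)])
    fix x y i assume x: "nonneg x" "x \<le> (\<lambda>_. B)" and y: "nonneg y" "y \<le> (\<lambda>_. B)"
      and xy: "\<And>j. \<bar>x j - y j\<bar> < \<delta>"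
    have \<Gamma>: "\<bar>\<Gamma> x i - \<Gamma> y i\<bar> \<le> min (\<epsilon>/2) (d/2)" using \<delta>(2)[OF x(1) y(1) x(2) y(2) xy] .
    have "\<Gamma> z i \<in> {0..K}" if "nonneg z" "z \<le> (\<lambda>_. B)" for z
      using Gam_nonneg[OF that(1), of i] order_trans[OF Gam_mono[OF that, of i] K[of i]] by simp
    then have "dist (\<kappa> (\<Gamma> x i)) (\<kappa> (\<Gamma> y i)) < \<epsilon>/2"
      using d(2)[of "\<Gamma> y i" "\<Gamma> x i"] \<Gamma> d(1) x y by (simp add: dist_real_def)
    then show "\<bar>Gam_rho Ii gam mu \<kappa> x i - Gam_rho Ii gam mu \<kappa> y i\<bar> \<le> \<epsilon>"
      using \<Gamma> unfolding Gam_rho_eq dist_real_def by linarith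
  qed
qed

end

section \<open>The fixed points \<open>\<sigma>\<^sub>*(r)\<close>\<close>

locale decay_setting = gain Ii gam mu for Ii :: "'i \<Rightarrow> 'i set" and gam and mu +
  fixes \<rho> \<phi> :: "real \<Rightarrow> real"
  assumes rho: "Kinf \<rho>" and phi: "Kinf \<phi>"
    and mbi: "\<And>s b. s \<in> linf_pos \<Longrightarrow> b \<in> linf_pos \<Longrightarrow>
      (\<forall>i. s i \<le> oplus b (Gam_rho Ii gam mu \<rho> s) i) \<Longrightarrow> supnorm s \<le> \<phi> (supnorm b)"
    and attractive: "\<And>r. 0 \<le> r \<Longrightarrow>
      glob_attr_fixpoint (\<lambda>s. oplus (\<lambda>_. r) (Gam_rho Ii gam mu \<rho> s)) (sigma_star Ii gam mu \<rho> r)"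
begin

abbreviation \<Gamma>\<^sub>\<rho> :: "('i \<Rightarrow> real) \<Rightarrow> 'i \<Rightarrow> real" where
  "\<Gamma>\<^sub>\<rho> \<equiv> Gam_rho Ii gam mu \<rho>"

abbreviation sstar :: "real \<Rightarrow> 'i \<Rightarrow> real" where
  "sstar \<equiv> sigma_star Ii gam mu \<rho>"

definition T :: "real \<Rightarrow> ('i \<Rightarrow> real) \<Rightarrow> 'i \<Rightarrow> real" where
  "T r s = oplus (\<lambda>_. r) (\<Gamma>\<^sub>\<rho> s)"

lemma T_apply: "T r s i = max r (\<Gamma>\<^sub>\<rho> s i)"
  unfolding T_def oplus_def by simp

lemma T_nonneg: "0 \<le> r \<Longrightarrow> nonneg (T r s)"
  unfolding nonneg_def T_apply by (simp add: le_max_iff_disj)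

lemma T_mono: "nonneg x \<Longrightarrow> x \<le> y \<Longrightarrow> r \<le> r' \<Longrightarrow> T r x i \<le> T r' y i"
  unfolding T_apply using Gam_rho_mono[OF rho] by (meson max.mono)

lemma T_diff: "\<bar>T r x i - T r' y i\<bar> \<le> \<bar>r - r'\<bar> + \<bar>\<Gamma>\<^sub>\<rho> x i - \<Gamma>\<^sub>\<rho> y i\<bar>"
  unfolding T_apply by (simp add: max_def abs_if)

lemma T_iter_nonneg: "0 \<le> r \<Longrightarrow> nonneg x \<Longrightarrow> nonneg ((T r ^^ n) x)"
  by (induction n) (auto intro: T_nonneg)

lemma T_iter_mono:
  assumes "0 \<le> r" "nonneg x" "x \<le> y"
  shows "(T r ^^ n) x \<le> (T r ^^ n) y"
proof (induction n)
  case (Suc n)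
  then show ?case
    using T_mono[OF T_iter_nonneg[OF assms(1,2), of n] Suc order_refl] by (simp add: le_fun_def)
qed (use assms in simp)

lemma sstar_in_linf_pos: "0 \<le> r \<Longrightarrow> sstar r \<in> linf_pos"
  and T_sstar: "0 \<le> r \<Longrightarrow> T r (sstar r) = sstar r"
  and T_iter_tendsto_sstar:
    "0 \<le> r \<Longrightarrow> s \<in> linf_pos \<Longrightarrow> (\<lambda>n. supnorm (\<lambda>i. (T r ^^ n) s i - sstar r i)) \<longlonglongrightarrow> 0"
  using attractive unfolding glob_attr_fixpoint_def T_def by auto

lemma sstar_eq: "0 \<le> r \<Longrightarrow> sstar r i = max r (\<Gamma>\<^sub>\<rho> (sstar r) i)"
  using T_sstar T_apply by metis

lemma le_sstar: "0 \<le> r \<Longrightarrow> r \<le> sstar r i"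
  using sstar_eq by (metis max.cobounded1)

lemma sstar_nonneg: "0 \<le> r \<Longrightarrow> nonneg (sstar r)"
  using le_sstar unfolding nonneg_def by (meson order_trans)

lemma Gam_rho_sstar_le: "0 \<le> r \<Longrightarrow> \<Gamma>\<^sub>\<rho> (sstar r) i \<le> sstar r i"
  using sstar_eq by (metis max.cobounded2)

lemma sstar_le_phi:
  assumes r: "0 \<le> r"
  shows "sstar r i \<le> \<phi> r"
proof -
  have "(\<lambda>_. r) \<in> linf_pos" using r by (intro linf_posI) auto
  moreover have "\<forall>i. sstar r i \<le> oplus (\<lambda>_. r) (\<Gamma>\<^sub>\<rho> (sstar r)) i"
    using sstar_eq[OF r] by (simp add: oplus_def)
  ultimately have "supnorm (sstar r) \<le> \<phi> r"
    using mbi[OF sstar_in_linf_pos[OF r]] supnorm_const[OF r] by metis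
  then show ?thesis using linf_pos_le_supnorm[OF sstar_in_linf_pos[OF r]] by (meson order_trans)
qed

lemma Gam_const_le_phi:
  assumes B: "0 \<le> B"
  shows "\<Gamma> (\<lambda>_. B) i \<le> \<phi> B"
proof -
  have "\<Gamma> (\<lambda>_. B) i \<le> \<Gamma> (sstar B) i"
    using le_sstar[OF B] by (intro Gam_mono nonneg_const B) (simp add: le_fun_def)
  also have "\<dots> \<le> \<Gamma>\<^sub>\<rho> (sstar B) i" by (rule Gam_le_Gam_rho[OF rho sstar_nonneg[OF B]])
  also have "\<dots> \<le> sstar B i" by (rule Gam_rho_sstar_le[OF B])
  also have "\<dots> \<le> \<phi> B" by (rule sstar_le_phi[OF B])
  finally show ?thesis .
qed

lemma T_iter_le_sstar:
  assumes "0 \<le> r" "r \<le> R" "nonneg s" "s \<le> sstar R"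
  shows "(T r ^^ n) s \<le> sstar R"
proof (induction n)
  case (Suc n)
  have "T r ((T r ^^ n) s) i \<le> T R (sstar R) i" for i
    using T_mono[OF T_iter_nonneg[OF assms(1,3)] Suc assms(2)] .
  then show ?case using T_sstar[of R] assms by (simp add: le_fun_def)
qed (use assms in simp)

lemma sstar_bounds: "0 \<le> r \<Longrightarrow> r \<le> R \<Longrightarrow> 0 \<le> sstar r i \<and> sstar r i \<le> \<phi> R"
  using sstar_nonneg sstar_le_phi Kinf_mono[OF phi] unfolding nonneg_def by (meson order_trans)

lemma T_iter_approaches_sstar:
  assumes r: "0 \<le> r" "r \<le> R" and s: "nonneg s" "s \<le> sstar R" and e: "0 < \<epsilon>"
  obtains N where "\<And>i. \<bar>(T r ^^ N) s i - sstar r i\<bar> < \<epsilon>"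
proof -
  have R: "0 \<le> R" using r by linarith
  have iter: "0 \<le> (T r ^^ n) s j \<and> (T r ^^ n) s j \<le> \<phi> R" for n j
    using T_iter_nonneg[OF r(1) s(1), of n] T_iter_le_sstar[OF r s, of n] sstar_bounds[OF R order_refl, of j]
    unfolding nonneg_def le_fun_def by (meson order_trans)
  then have "s \<in> linf_pos" by (intro linf_posI[of s "\<phi> R"]) (metis funpow_0)+
  moreover have "\<bar>(T r ^^ n) s j - sstar r j\<bar> \<le> \<phi> R" for n j
    using iter[of n j] sstar_bounds[OF r, of j] by linarith
  ultimately show thesis
    using supnorm_tendsto_0_imp_close[OF T_iter_tendsto_sstar[OF r(1)] _ e] that by blast
qed

lemma sstar_mono:
  assumes r: "0 \<le> r" and rr: "r \<le> r'"
  shows "sstar r i \<le> sstar r' i"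
proof (rule field_le_epsilon)
  fix e :: real assume e: "0 < e"
  have r': "0 \<le> r'" using r rr by linarith
  obtain N where "\<bar>(T r ^^ N) (sstar r') i - sstar r i\<bar> < e"
    using T_iter_approaches_sstar[OF r rr sstar_nonneg[OF r'] order_refl e] by blast
  moreover have "(T r ^^ N) (sstar r') i \<le> sstar r' i"
    using T_iter_le_sstar[OF r rr sstar_nonneg[OF r'] order_refl] by (simp add: le_fun_def)
  ultimately show "sstar r i \<le> sstar r' i + e" by linarith
qed

lemma T_iter_sstar_close:
  assumes r: "0 \<le> r" and e: "0 < \<epsilon>"
  shows "\<exists>\<eta>>0. \<forall>r'. 0 \<le> r' \<longrightarrow> r' \<le> r + 1 \<longrightarrow> \<bar>r' - r\<bar> < \<eta> \<longrightarrow>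
           (\<forall>i. \<bar>(T r ^^ K) (sstar r') i - sstar r' i\<bar> \<le> \<epsilon>)"
  using e
proof (induction K arbitrary: \<epsilon>)
  case 0
  then show ?case by (auto intro: exI[of _ 1])
next
  case (Suc K)
  define B where "B = \<phi> (r + 1)"
  have B: "0 \<le> B" unfolding B_def using Kinf_nonneg[OF phi] r by simp
  obtain d where d: "0 < d" "\<And>x y i. nonneg x \<Longrightarrow> nonneg y \<Longrightarrow> x \<le> (\<lambda>_. B) \<Longrightarrow> y \<le> (\<lambda>_. B) \<Longrightarrow>
      (\<And>j. \<bar>x j - y j\<bar> < d) \<Longrightarrow> \<bar>\<Gamma>\<^sub>\<rho> x i - \<Gamma>\<^sub>\<rho> y i\<bar> \<le> \<epsilon>/2"
    using Gam_rho_uniformly_continuous[OF rho B Gam_const_le_phi[OF B], of "\<epsilon>/2"] Suc.prems by auto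
  obtain \<eta> where \<eta>: "0 < \<eta>" "\<And>r'. 0 \<le> r' \<Longrightarrow> r' \<le> r + 1 \<Longrightarrow> \<bar>r' - r\<bar> < \<eta> \<Longrightarrow>
      (\<forall>i. \<bar>(T r ^^ K) (sstar r') i - sstar r' i\<bar> \<le> d/2)"
    using Suc.IH[of "d/2"] d(1) by auto
  have "\<bar>(T r ^^ Suc K) (sstar r') i - sstar r' i\<bar> \<le> \<epsilon>"
    if r': "0 \<le> r'" "r' \<le> r + 1" "\<bar>r' - r\<bar> < min \<eta> (\<epsilon>/2)" for r' i
  proof -
    define X where "X = (T r ^^ K) (sstar r')"
    have "X \<le> sstar (max r r')" unfolding X_def
      by (rule T_iter_le_sstar[OF r _ sstar_nonneg[OF r'(1)]]) (auto simp: le_fun_def intro: sstar_mono r')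
    then have "X \<le> (\<lambda>_. B)" "sstar r' \<le> (\<lambda>_. B)"
      using sstar_bounds[of "max r r'" "r + 1"] sstar_bounds[OF r'(1,2)] r r'
      unfolding B_def le_fun_def by (auto intro: order_trans)
    moreover have "\<bar>X j - sstar r' j\<bar> < d" for j
    proof -
      have "\<bar>r' - r\<bar> < \<eta>" using r'(3) by simp
      then have "\<bar>X j - sstar r' j\<bar> \<le> d/2" using \<eta>(2)[OF r'(1,2)] unfolding X_def by blast
      then show ?thesis using d(1) by linarith
    qed
    ultimately have "\<bar>\<Gamma>\<^sub>\<rho> X i - \<Gamma>\<^sub>\<rho> (sstar r') i\<bar> \<le> \<epsilon>/2"
      using d(2) T_iter_nonneg[OF r sstar_nonneg[OF r'(1)]] sstar_nonneg[OF r'(1)] unfolding X_def by blast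
    moreover have "(T r ^^ Suc K) (sstar r') i = T r X i" "sstar r' i = T r' (sstar r') i"
      using T_sstar[OF r'(1)] by (simp_all add: X_def)
    ultimately show ?thesis
      using T_diff[of r X i r' "sstar r'"] r'(3) by (simp add: abs_minus_commute)
  qed
  then show ?case using \<eta>(1) Suc.prems by (intro exI[of _ "min \<eta> (\<epsilon>/2)"]) auto
qed

text \<open>Compare \<open>sstar r'\<close> with a fixed number of iterates of \<open>T r\<close>: these move \<open>sstar r'\<close> only
  slightly when \<open>r'\<close> is close to \<open>r\<close>, while by attractivity they bring everything between
  \<open>0\<close> and \<open>sstar (r + 1)\<close> close to \<open>sstar r\<close>.\<close>
lemma sstar_continuous:
  assumes r: "0 \<le> r" and e: "0 < \<epsilon>"
  obtains \<delta> where "0 < \<delta>" "\<And>r' i. 0 \<le> r' \<Longrightarrow> \<bar>r' - r\<bar> < \<delta> \<Longrightarrow> \<bar>sstar r' i - sstar r i\<bar> \<le> \<epsilon>"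
proof -
  have r1: "0 \<le> r + 1" "r \<le> r + 1" using r by simp_all
  obtain N where N: "\<And>i. \<bar>(T r ^^ N) (sstar (r + 1)) i - sstar r i\<bar> < \<epsilon>/2"
    using T_iter_approaches_sstar[OF r r1(2) sstar_nonneg[OF r1(1)] order_refl, of "\<epsilon>/2"] e by auto
  obtain N' where N': "\<And>i. \<bar>(T r ^^ N') (\<lambda>_. 0) i - sstar r i\<bar> < \<epsilon>/2"
    using T_iter_approaches_sstar[OF r order_refl nonneg_const[of 0], of "\<epsilon>/2"] e sstar_nonneg[OF r]
    by (auto simp: le_fun_def nonneg_def)
  obtain \<eta> where \<eta>: "0 < \<eta>" "\<And>r'. 0 \<le> r' \<Longrightarrow> r' \<le> r + 1 \<Longrightarrow> \<bar>r' - r\<bar> < \<eta> \<Longrightarrow>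
      (\<forall>i. \<bar>(T r ^^ N) (sstar r') i - sstar r' i\<bar> \<le> \<epsilon>/2)"
    using T_iter_sstar_close[OF r, of "\<epsilon>/2" N] e by auto
  obtain \<eta>' where \<eta>': "0 < \<eta>'" "\<And>r'. 0 \<le> r' \<Longrightarrow> r' \<le> r + 1 \<Longrightarrow> \<bar>r' - r\<bar> < \<eta>' \<Longrightarrow>
      (\<forall>i. \<bar>(T r ^^ N') (sstar r') i - sstar r' i\<bar> \<le> \<epsilon>/2)"
    using T_iter_sstar_close[OF r, of "\<epsilon>/2" N'] e by auto
  have "\<bar>sstar r' i - sstar r i\<bar> \<le> \<epsilon>" if r': "0 \<le> r'" "\<bar>r' - r\<bar> < min (min \<eta> \<eta>') 1" for r' i
  proof (cases "r \<le> r'")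
    case True
    have "r' \<le> r + 1" using r'(2) by (simp add: abs_less_iff)
    then have "sstar r' \<le> sstar (r + 1)" using sstar_mono[OF r'(1)] by (simp add: le_fun_def)
    then have "(T r ^^ N) (sstar r') i \<le> (T r ^^ N) (sstar (r + 1)) i"
      using T_iter_mono[OF r sstar_nonneg[OF r'(1)]] by (simp add: le_fun_def)
    moreover have "\<bar>(T r ^^ N) (sstar r') i - sstar r' i\<bar> \<le> \<epsilon>/2"
      using \<eta>(2)[OF r'(1) \<open>r' \<le> r + 1\<close>] r'(2) by simp
    ultimately show ?thesis
      using sstar_mono[OF r True, of i] N[of i] unfolding abs_le_iff abs_less_iff by linarith
  next
    case False
    have "(T r ^^ N') (\<lambda>_. 0) i \<le> (T r ^^ N') (sstar r') i"
      using T_iter_mono[OF r nonneg_const, of 0 "sstar r'" N'] sstar_nonneg[OF r'(1)]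
      by (simp add: le_fun_def nonneg_def)
    moreover have "\<bar>(T r ^^ N') (sstar r') i - sstar r' i\<bar> \<le> \<epsilon>/2"
      using \<eta>'(2)[OF r'(1)] r'(2) False by simp
    ultimately show ?thesis
      using sstar_mono[OF r'(1), of r i] False N'[of i] unfolding abs_le_iff abs_less_iff by linarith
  qed
  then show thesis using that[of "min (min \<eta> \<eta>') 1"] \<eta>(1) \<eta>'(1) by auto
qed

definition margin :: "real \<Rightarrow> real" where
  "margin S = min (S/4) (\<rho> (S/4) / 2)"

lemma margin_pos: "0 < S \<Longrightarrow> 0 < margin S"
  unfolding margin_def using Kinf_pos[OF rho, of "S/4"] by simp

lemma margin_mono: "0 \<le> S \<Longrightarrow> S \<le> S' \<Longrightarrow> margin S \<le> margin S'"
  unfolding margin_def using Kinf_mono[OF rho, of "S/4" "S'/4"] by (simp add: min_def)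

text \<open>Halving \<open>\<rho>\<close> creates a uniform gap below \<open>sstar S\<close>: either \<open>\<rho>(\<Gamma>)/2\<close> itself is at least
  the margin, or \<open>\<Gamma> < S/4\<close> and the bound \<open>S \<le> sstar S\<close> leaves room.\<close>
lemma Gam_half_rho_sstar_le:
  assumes S: "0 < S"
  shows "Gam_rho Ii gam mu (\<lambda>t. \<rho> t / 2) (sstar S) i \<le> sstar S i - margin S"
proof -
  define g where "g = \<Gamma> (sstar S) i"
  have g: "0 \<le> g" unfolding g_def using Gam_nonneg[OF sstar_nonneg] S by simp
  have gap: "g + \<rho> g \<le> sstar S i" using Gam_rho_sstar_le[of S i] S unfolding g_def Gam_rho_eq by simp
  show ?thesis
  proof (cases "\<rho> g / 2 < margin S")
    case True
    then have "g < S/4" using Kinf_less_iff[OF rho g, of "S/4"] S unfolding margin_def by simp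
    moreover have "S \<le> sstar S i" using le_sstar S by simp
    moreover have "margin S \<le> S/4" by (simp add: margin_def)
    ultimately show ?thesis using True S unfolding Gam_rho_eq g_def[symmetric] by linarith
  next
    case False
    then show ?thesis using gap unfolding Gam_rho_eq g_def[symmetric] by linarith
  qed
qed

lemma sstar_step_near_diagonal:
  "holds_near_diagonal (\<lambda>x y. \<forall>i. sstar y i \<le> sstar x i + margin x / 2)"
  unfolding holds_near_diagonal_def
proof (intro allI impI)
  fix L :: real assume L: "0 < L"
  obtain \<delta> where \<delta>: "0 < \<delta>" "\<And>r i. 0 \<le> r \<Longrightarrow> \<bar>r - L\<bar> < \<delta> \<Longrightarrow> \<bar>sstar r i - sstar L i\<bar> \<le> margin (L/2) / 4"
    using sstar_continuous[of L "margin (L/2) / 4"] L margin_pos[of "L/2"] by auto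
  define a where "a = L - min \<delta> (L/2)"
  have "sstar y i \<le> sstar x i + margin x / 2" if "a < x" "x \<le> y" "y < L + \<delta>" for x y i
  proof -
    have x: "L/2 \<le> x" "\<bar>x - L\<bar> < \<delta>" and y: "0 \<le> y" "\<bar>y - L\<bar> < \<delta>"
      using that L \<delta>(1) unfolding a_def by (auto simp: abs_less_iff)
    have "margin (L/2) \<le> margin x" using margin_mono[of "L/2" x] x L by simp
    then show ?thesis
      using \<delta>(2)[OF _ x(2), of i] \<delta>(2)[OF y, of i] x L unfolding abs_le_iff by linarith
  qed
  moreover have "0 < a" "a < L" "L < L + \<delta>" using L \<delta>(1) unfolding a_def by auto
  ultimately show "\<exists>a b. 0 < a \<and> a < L \<and> L < b \<and>
      (\<forall>x y. a < x \<longrightarrow> x \<le> y \<longrightarrow> y < b \<longrightarrow> (\<forall>i. sstar y i \<le> sstar x i + margin x / 2))"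
    by blast
qed

end

section \<open>The path of strict decay\<close>

text \<open>Any weights in \<open>(0, 1)\<close> that strictly increase with \<open>k\<close> and are at least \<open>1/2\<close> for
  \<open>k \<ge> 0\<close> would do.\<close>
definition weight :: "int \<Rightarrow> real" where
  "weight k = 1/2 + arctan (real_of_int k) / pi"

lemma weight_bounds: "0 < weight k" "weight k < 1"
  using arctan_bounded[of "real_of_int k"] pi_gt_zero unfolding weight_def by (simp_all add: field_simps)

lemma weight_less: "weight k < weight (k + 1)"
  unfolding weight_def by (simp add: arctan_less_iff divide_strict_right_mono)

lemma weight_mono: "k \<le> l \<Longrightarrow> weight k \<le> weight l"
  unfolding weight_def by (simp add: arctan_le_iff divide_right_mono)

lemma weight_ge_half: "0 \<le> k \<Longrightarrow> 1/2 \<le> weight k"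
  unfolding weight_def by simp

locale decay_grid = decay_setting Ii gam mu \<rho> \<phi> for Ii :: "'i \<Rightarrow> 'i set" and gam mu \<rho> \<phi> +
  fixes S :: "int \<Rightarrow> real"
  assumes S_pos: "\<And>k. 0 < S k" and S_less: "\<And>k. S k < S (k + 1)"
    and S_step: "\<And>k i. sstar (S (k + 1)) i \<le> sstar (S k) i + margin (S k) / 2"
    and S_unbounded: "\<And>M. \<exists>k. M < S k" and S_to_0: "\<And>\<epsilon>. 0 < \<epsilon> \<Longrightarrow> \<exists>k. S k < \<epsilon>"
begin

lemma S_nonneg: "0 \<le> S k"
  using S_pos[of k] by simp

lemma S_mono: "k \<le> l \<Longrightarrow> S k \<le> S l"
  using strict_mono_int_iff_step[of S] S_less by (simp add: strict_mono_less_eq)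

lemma Kinf_half_rho: "Kinf (\<lambda>t. \<rho> t / 2)"
  by (rule Kinf_divide[OF rho]) simp

definition lower :: "int \<Rightarrow> 'i \<Rightarrow> real" where
  "lower k = Gam_rho Ii gam mu (\<lambda>t. \<rho> t / 2) (sstar (S (k + 1)))"

definition upper :: "int \<Rightarrow> 'i \<Rightarrow> real" where
  "upper k = sstar (S k)"

text \<open>Since the weights increase, the gap between \<open>lower\<close> and \<open>upper\<close> makes these values
  strictly increasing in \<open>k\<close>.\<close>
definition node_value :: "int \<Rightarrow> 'i \<Rightarrow> real" where
  "node_value k i = lower k i + weight k * (upper k i - lower k i)"

lemma lower_nonneg: "0 \<le> lower k i"
  unfolding lower_def by (rule Gam_rho_nonneg[OF Kinf_half_rho sstar_nonneg[OF S_nonneg]])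

lemma lower_mono: "lower k i \<le> lower (k + 1) i"
  unfolding lower_def using sstar_mono[OF S_nonneg S_mono, of "k + 1" "k + 1 + 1"]
  by (intro Gam_rho_mono[OF Kinf_half_rho sstar_nonneg[OF S_nonneg]]) (simp add: le_fun_def)

lemma upper_mono: "upper k i \<le> upper (k + 1) i"
  unfolding upper_def by (rule sstar_mono[OF S_nonneg S_mono]) simp

lemma upper_minus_lower: "margin (S k) / 2 \<le> upper k i - lower k i"
proof -
  have "lower k i \<le> sstar (S (k + 1)) i - margin (S (k + 1))"
    unfolding lower_def by (rule Gam_half_rho_sstar_le[OF S_pos])
  moreover have "margin (S k) \<le> margin (S (k + 1))" by (rule margin_mono[OF S_nonneg S_mono]) simp
  ultimately show ?thesis using S_step[of k i] unfolding upper_def by linarith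
qed

lemma lower_le_upper: "lower k i \<le> upper k i"
  using upper_minus_lower[of k i] margin_pos[OF S_pos, of k] by linarith

lemma lower_le_node_value: "lower k i \<le> node_value k i"
  unfolding node_value_def using weight_bounds[of k] lower_le_upper[of k i] by simp

lemma node_value_le_upper: "node_value k i \<le> upper k i"
proof -
  have "weight k * (upper k i - lower k i) \<le> 1 * (upper k i - lower k i)"
    using weight_bounds[of k] lower_le_upper[of k i] by (intro mult_right_mono) auto
  then show ?thesis unfolding node_value_def by simp
qed

lemma node_value_le_phi: "node_value k i \<le> \<phi> (S k)"
  using node_value_le_upper[of k i] sstar_le_phi[OF S_nonneg] unfolding upper_def by (meson order_trans)

lemma weight_S_le_node_value: "weight k * S k \<le> node_value k i"
proof -
  have "node_value k i = (1 - weight k) * lower k i + weight k * upper k i"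
    unfolding node_value_def by (simp add: algebra_simps)
  moreover have "0 \<le> (1 - weight k) * lower k i" using weight_bounds[of k] lower_nonneg[of k i] by simp
  moreover have "weight k * S k \<le> weight k * upper k i"
    unfolding upper_def using weight_bounds[of k] le_sstar[OF S_nonneg] by (intro mult_left_mono) auto
  ultimately show ?thesis by linarith
qed

lemma node_value_pos: "0 < node_value k i"
  using weight_S_le_node_value[of k i] weight_bounds[of k] S_pos[of k]
  by (meson mult_pos_pos order_less_le_trans)

lemma node_value_increment:
  "(weight (k + 1) - weight k) * (margin (S k) / 2) \<le> node_value (k + 1) i - node_value k i"
proof -
  define w1 w0 where "w1 = weight (k + 1)" and "w0 = weight k"
  have "node_value (k + 1) i - node_value k i = (1 - w1) * (lower (k + 1) i - lower k i)
      + w1 * (upper (k + 1) i - upper k i) + (w1 - w0) * (upper k i - lower k i)"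
    unfolding node_value_def w1_def w0_def by (simp add: algebra_simps)
  moreover have "0 \<le> (1 - w1) * (lower (k + 1) i - lower k i)"
    using weight_bounds[of "k + 1"] lower_mono[of k i] unfolding w1_def by simp
  moreover have "0 \<le> w1 * (upper (k + 1) i - upper k i)"
    using weight_bounds[of "k + 1"] upper_mono[of k i] unfolding w1_def by simp
  moreover have "(w1 - w0) * (margin (S k) / 2) \<le> (w1 - w0) * (upper k i - lower k i)"
    using upper_minus_lower[of k i] weight_less[of k] unfolding w1_def w0_def by (intro mult_left_mono) auto
  ultimately show ?thesis unfolding w1_def w0_def by linarith
qed

lemma node_value_increment_bound_pos: "0 < (weight (k + 1) - weight k) * (margin (S k) / 2)"
  using weight_less[of k] margin_pos[OF S_pos, of k] by simp

lemma phi_S_small: "0 < e \<Longrightarrow> \<exists>k. \<phi> (S k) < e"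
proof -
  assume "0 < e"
  then obtain d where d: "0 < d" "\<forall>x. 0 \<le> x \<longrightarrow> x < d \<longrightarrow> \<phi> x < e" using Kinf_small[OF phi] by blast
  obtain k where "S k < d" using S_to_0[OF d(1)] by blast
  then show ?thesis using d(2) S_nonneg[of k] by blast
qed

lemma weight_S_mono: "k \<le> l \<Longrightarrow> weight k * S k \<le> weight l * S l"
  using weight_mono[of k l] S_mono[of k l] weight_bounds[of k] S_pos[of k] by (intro mult_mono) auto

lemma weight_S_unbounded: "\<exists>k. M < weight k * S k"
proof -
  obtain k where k: "2 * M < S k" using S_unbounded by blast
  have "S k / 2 \<le> S (max k 0) / 2" using S_mono[of k "max k 0"] by simp
  also have "\<dots> \<le> weight (max k 0) * S (max k 0)"
    using mult_right_mono[OF weight_ge_half S_nonneg, of "max k 0" "max k 0"] by simp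
  finally have "S k / 2 \<le> weight (max k 0) * S (max k 0)" .
  then show ?thesis using k by (intro exI[of _ "max k 0"]) linarith
qed

lemma Kinf_sequence_node_value: "Kinf_sequence (\<lambda>k. node_value k i)"
proof
  show "strict_mono (\<lambda>k. node_value k i)"
    unfolding strict_mono_int_iff_step using node_value_increment node_value_increment_bound_pos
    by (meson diff_gt_0_iff_gt order_less_le_trans)
  show "0 < node_value k i" for k by (rule node_value_pos)
  show "\<exists>k. node_value k i < e" if "0 < e" for e
    using phi_S_small[OF that] node_value_le_phi by (meson le_less_trans)
  show "\<exists>k. M < node_value k i" for M
    using weight_S_unbounded weight_S_le_node_value by (meson less_le_trans)
qed

definition decay_path :: "real \<Rightarrow> 'i \<Rightarrow> real" where
  "decay_path r i = pwlin (\<lambda>k. node_value k i) r"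

lemma decay_path_Kinf: "Kinf (\<lambda>r. decay_path r i)"
  unfolding decay_path_def using Kinf_sequence.pwlin_Kinf[OF Kinf_sequence_node_value] by simp

lemma decay_path_between:
  "node k \<le> r \<Longrightarrow> r \<le> node (k + 1) \<Longrightarrow> node_value k i \<le> decay_path r i \<and> decay_path r i \<le> node_value (k + 1) i"
  unfolding decay_path_def using Kinf_sequence.pwlin_between[OF Kinf_sequence_node_value] by blast

lemma Gam_half_rho_decay_path_le:
  assumes r: "0 \<le> r"
  shows "Gam_rho Ii gam mu (\<lambda>t. \<rho> t / 2) (decay_path r) i \<le> decay_path r i"
proof (cases "r = 0")
  case True
  have "decay_path r = (\<lambda>_. 0)" using True by (simp add: decay_path_def fun_eq_iff)
  then show ?thesis
    using True Kinf_0[OF rho] by (simp add: Gam_rho_eq Gam_zero)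
next
  case False
  then obtain k where k: "node k \<le> r" "r < node (k + 1)" using node_interval[of r] r by auto
  have nonneg: "nonneg (decay_path r)"
    unfolding nonneg_def using Kinf_nonneg[OF decay_path_Kinf r] by blast
  have "decay_path r \<le> sstar (S (k + 1))"
    using decay_path_between[of k r] node_value_le_upper[of "k + 1"] k
    unfolding upper_def le_fun_def by (meson less_imp_le order_trans)
  then have "Gam_rho Ii gam mu (\<lambda>t. \<rho> t / 2) (decay_path r) i \<le> lower k i"
    unfolding lower_def by (rule Gam_rho_mono[OF Kinf_half_rho nonneg])
  also have "\<dots> \<le> node_value k i" by (rule lower_le_node_value)
  also have "\<dots> \<le> decay_path r i" using decay_path_between[of k r i] k by simp
  finally show ?thesis .
qed

text \<open>Shifted by one node, so that on \<open>[node k, node (k + 1)]\<close> the envelopes are bounded by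
  \<open>node_value k\<close> and \<open>node_value (k + 1)\<close>, which lie between \<open>weight k * S k\<close> and \<open>\<phi> (S (k + 1))\<close>.\<close>
definition lower_envelope :: "int \<Rightarrow> real" where
  "lower_envelope k = weight (k - 1) * S (k - 1)"

definition upper_envelope :: "int \<Rightarrow> real" where
  "upper_envelope k = \<phi> (S (k + 1))"

lemma Kinf_sequence_lower_envelope: "Kinf_sequence lower_envelope"
proof
  have "weight (k - 1) * S (k - 1) < weight (k - 1 + 1) * S (k - 1 + 1)" for k
    by (rule mult_strict_mono[OF weight_less S_less weight_bounds(1) S_nonneg])
  then show "strict_mono lower_envelope"
    unfolding strict_mono_int_iff_step lower_envelope_def by simp
  show "0 < lower_envelope k" for k
    unfolding lower_envelope_def using weight_bounds S_pos by simp
  show "\<exists>k. lower_envelope k < e" if e: "0 < e" for e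
  proof -
    obtain k where k: "S k < e" using S_to_0[OF e] by blast
    have "weight k * S k \<le> S k" using weight_bounds[of k] S_pos[of k] by simp
    then show ?thesis using k unfolding lower_envelope_def by (intro exI[of _ "k + 1"]) simp
  qed
  show "\<exists>k. M < lower_envelope k" for M
    using weight_S_unbounded[of M] unfolding lower_envelope_def by (metis add_diff_cancel_right')
qed

lemma Kinf_sequence_upper_envelope: "Kinf_sequence upper_envelope"
proof
  have "\<phi> (S (k + 1)) < \<phi> (S (k + 1 + 1))" for k by (rule Kinf_less[OF phi S_nonneg S_less])
  then show "strict_mono upper_envelope"
    unfolding strict_mono_int_iff_step upper_envelope_def by simp
  show "0 < upper_envelope k" for k
    unfolding upper_envelope_def using Kinf_pos[OF phi S_pos] .
  show "\<exists>k. upper_envelope k < e" if "0 < e" for e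
    using phi_S_small[OF that] unfolding upper_envelope_def by (metis diff_add_cancel)
  show "\<exists>k. M < upper_envelope k" for M
  proof -
    obtain x where x: "x \<ge> 0" "M < \<phi> x" using Kinf_unbounded[OF phi] by blast
    obtain k where "x < S k" using S_unbounded by blast
    then have "M < \<phi> (S k)" using Kinf_less[OF phi x(1)] x(2) by (meson less_trans)
    then show ?thesis unfolding upper_envelope_def by (metis diff_add_cancel)
  qed
qed

lemma decay_path_envelope:
  assumes r: "0 \<le> r"
  shows "pwlin lower_envelope r \<le> decay_path r i \<and> decay_path r i \<le> pwlin upper_envelope r"
proof (cases "r = 0")
  case False
  then obtain k where k: "node k \<le> r" "r < node (k + 1)" using node_interval[of r] r by auto
  have "pwlin lower_envelope r \<le> lower_envelope (k + 1)"
    using Kinf_sequence.pwlin_between[OF Kinf_sequence_lower_envelope] k by simp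
  also have "\<dots> \<le> node_value k i" unfolding lower_envelope_def by (simp add: weight_S_le_node_value)
  also have "\<dots> \<le> decay_path r i" using decay_path_between[of k r i] k by simp
  finally have "pwlin lower_envelope r \<le> decay_path r i" .
  moreover have "decay_path r i \<le> node_value (k + 1) i" using decay_path_between[of k r i] k by simp
  moreover have "node_value (k + 1) i \<le> upper_envelope k"
    unfolding upper_envelope_def by (rule node_value_le_phi)
  moreover have "upper_envelope k \<le> pwlin upper_envelope r"
    using Kinf_sequence.pwlin_between[OF Kinf_sequence_upper_envelope] k by simp
  ultimately show ?thesis by linarith
qed (simp add: decay_path_def)

lemma decay_path_in_linf_pos: "0 \<le> r \<Longrightarrow> decay_path r \<in> linf_pos"
  using Kinf_nonneg[OF decay_path_Kinf] decay_path_envelope by (intro linf_posI) auto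

lemma decay_path_slope_bounds:
  assumes ab: "a < b"
  obtains c C where "0 < c" "c \<le> C"
    "\<And>x y i. node a \<le> x \<Longrightarrow> x \<le> y \<Longrightarrow> y \<le> node b \<Longrightarrow>
       c * (y - x) \<le> decay_path y i - decay_path x i \<and> decay_path y i - decay_path x i \<le> C * (y - x)"
proof -
  define lo where "lo k = (weight (k + 1) - weight k) * (margin (S k) / 2)" for k
  define hi where "hi k = \<phi> (S (k + 1))" for k
  have increment: "lo k \<le> node_value (k + 1) i - node_value k i" "node_value (k + 1) i - node_value k i \<le> hi k"
    for k i
    using node_value_increment[of k i] node_value_le_phi[of "k + 1" i] node_value_pos[of k i]
    unfolding lo_def hi_def by simp_all
  define c where "c = Min ((\<lambda>k. lo k / node k) ` {a..<b})"
  define C where "C = Max ((\<lambda>k. hi k / node k) ` {a..<b})"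
  have c_le: "c \<le> lo k / node k" and C_ge: "hi k / node k \<le> C" if "a \<le> k" "k < b" for k
    unfolding c_def C_def using that by (auto intro: Min_le Max_ge)
  have "0 < lo k / node k" for k
    using node_value_increment_bound_pos[of k] node_pos[of k] unfolding lo_def by simp
  then have "0 < c" unfolding c_def using ab by (simp add: Min_gr_iff)
  moreover have "c \<le> C"
  proof -
    have "lo a \<le> hi a" using increment[of a undefined] by linarith
    then have "lo a / node a \<le> hi a / node a" using node_pos[of a] by (simp add: divide_right_mono)
    then show ?thesis using c_le[of a] C_ge[of a] ab by linarith
  qed
  moreover have "c * (y - x) \<le> decay_path y i - decay_path x i \<and> decay_path y i - decay_path x i \<le> C * (y - x)"
    if "node a \<le> x" "x \<le> y" "y \<le> node b" for x y i
    unfolding decay_path_def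
  proof (rule pwlin_slope_bounds[OF less_imp_le[OF ab] _ that])
    fix k assume k: "a \<le> k" "k < b"
    show "c * node k \<le> node_value (k + 1) i - node_value k i \<and> node_value (k + 1) i - node_value k i \<le> C * node k"
      using c_le[OF k] C_ge[OF k] increment[of k i] node_pos[of k] by (simp add: field_simps)
  qed
  ultimately show thesis using that by blast
qed

lemma decay_path_inverse_bilipschitz:
  assumes K: "compact K" "K \<subseteq> {0<..}"
  shows "\<exists>l L. 0 < l \<and> l \<le> L \<and> (\<forall>r1\<in>K. \<forall>r2\<in>K. \<forall>i.
       l * \<bar>r1 - r2\<bar> \<le> \<bar>inv_into {0..} (\<lambda>r. decay_path r i) r1 - inv_into {0..} (\<lambda>r. decay_path r i) r2\<bar>
     \<and> \<bar>inv_into {0..} (\<lambda>r. decay_path r i) r1 - inv_into {0..} (\<lambda>r. decay_path r i) r2\<bar> \<le> L * \<bar>r1 - r2\<bar>)"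
proof (cases "K = {}")
  case True
  then show ?thesis by (intro exI[of _ 1]) simp
next
  case False
  obtain ylo where ylo: "ylo \<in> K" "\<And>y. y \<in> K \<Longrightarrow> ylo \<le> y" using compact_attains_inf[OF K(1) False] by blast
  obtain yhi where yhi: "\<And>y. y \<in> K \<Longrightarrow> y \<le> yhi" using compact_attains_sup[OF K(1) False] by blast
  obtain a where a: "\<phi> (S a) < ylo" using phi_S_small ylo(1) K(2) by force
  obtain b0 where b0: "yhi < weight b0 * S b0" using weight_S_unbounded by blast
  define b where "b = max b0 (a + 1)"
  have ab: "a < b" unfolding b_def by simp
  have b: "yhi < weight b * S b" using b0 weight_S_mono[of b0 b] unfolding b_def by simp
  obtain c C where c: "0 < c" "c \<le> C" and slope: "\<And>x y i. node a \<le> x \<Longrightarrow> x \<le> y \<Longrightarrow> y \<le> node b \<Longrightarrow>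
       c * (y - x) \<le> decay_path y i - decay_path x i \<and> decay_path y i - decay_path x i \<le> C * (y - x)"
    using decay_path_slope_bounds[OF ab] by blast
  have range: "decay_path (node a) i \<le> r" "r \<le> decay_path (node b) i" if "r \<in> K" for r i
    using node_value_le_phi[of a i] weight_S_le_node_value[of b i] a b ylo(2)[OF that] yhi[OF that]
    unfolding decay_path_def by simp_all
  have "(1/C) * \<bar>r1 - r2\<bar> \<le> \<bar>inv_into {0..} (\<lambda>r. decay_path r i) r1 - inv_into {0..} (\<lambda>r. decay_path r i) r2\<bar>
      \<and> \<bar>inv_into {0..} (\<lambda>r. decay_path r i) r1 - inv_into {0..} (\<lambda>r. decay_path r i) r2\<bar> \<le> (1/c) * \<bar>r1 - r2\<bar>"
    if "r1 \<in> K" "r2 \<in> K" for r1 r2 i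
    using Kinf_inv_into_bilipschitz[where A="node a" and B="node b", OF decay_path_Kinf _ _ c slope
        range[OF that(1)] range[OF that(2)]] node_pos[of a] ab
    by (simp add: node_le_iff)
  then show ?thesis using c by (intro exI[of _ "1/C"] exI[of _ "1/c"]) (simp add: frac_le)
qed

lemma path_strict_decay_decay_path: "path_strict_decay Ii gam mu decay_path"
  unfolding path_strict_decay_def
proof (intro conjI allI impI)
  show "decay_path r \<in> linf_pos" if "0 \<le> r" for r using decay_path_in_linf_pos[OF that] .
  show "\<exists>\<rho>. Kinf \<rho> \<and> (\<forall>r\<ge>0. \<forall>i. Gam_rho Ii gam mu \<rho> (decay_path r) i \<le> decay_path r i)"
    using Kinf_half_rho Gam_half_rho_decay_path_le by blast
  show "\<exists>\<phi>min \<phi>max. Kinf \<phi>min \<and> Kinf \<phi>max \<and> (\<forall>r\<ge>0. \<forall>i. \<phi>min r \<le> decay_path r i \<and> decay_path r i \<le> \<phi>max r)"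
    using Kinf_sequence.pwlin_Kinf[OF Kinf_sequence_lower_envelope]
      Kinf_sequence.pwlin_Kinf[OF Kinf_sequence_upper_envelope] decay_path_envelope by blast
  show "Kinf (\<lambda>r. decay_path r i)" for i by (rule decay_path_Kinf)
qed (use decay_path_inverse_bilipschitz in blast)

end

lemma (in decay_setting) decay_grid_exists:
  obtains S where "decay_grid Ii gam mu \<rho> \<phi> S"
proof (rule bi_infinite_chain[OF sstar_step_near_diagonal])
  fix S :: "int \<Rightarrow> real"
  assume "\<And>k. 0 < S k" "\<And>k. S k < S (k + 1)"
    "\<And>k. \<forall>i. sstar (S (k + 1)) i \<le> sstar (S k) i + margin (S k) / 2"
    "\<And>M. \<exists>k. M < S k" "\<And>\<epsilon>. 0 < \<epsilon> \<Longrightarrow> \<exists>k. S k < \<epsilon>"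
  then show thesis
    by (intro that[of S] decay_grid.intro[OF decay_setting_axioms] decay_grid_axioms.intro) simp_all
qed

theorem theorem3p13:
  fixes Ii :: "'i::countable \<Rightarrow> 'i set"
    and gam :: "'i \<Rightarrow> 'i \<Rightarrow> real \<Rightarrow> real"
    and mu :: "'i \<Rightarrow> ('i \<Rightarrow> real) \<Rightarrow> ereal"
    and \<rho> :: "real \<Rightarrow> real"
  assumes "gain_operator Ii gam mu"
    and "Kinf \<rho>"
    and "oplus_MBI (Gam_rho Ii gam mu \<rho>)"
    and "\<forall>r\<ge>0. sigma_star_exists Ii gam mu \<rho> r \<and> glob_attr_fixpoint (\<lambda>s. oplus (\<lambda>_. r) (Gam_rho Ii gam mu \<rho> s))
                 (sigma_star Ii gam mu \<rho> r)"
  shows "\<exists>\<sigma>. path_strict_decay Ii gam mu \<sigma>"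
proof -
  obtain \<phi> where "Kinf \<phi>" and mbi: "\<forall>s\<in>linf_pos. \<forall>b\<in>linf_pos.
      (\<forall>i. s i \<le> oplus b (Gam_rho Ii gam mu \<rho> s) i) \<longrightarrow> supnorm s \<le> \<phi> (supnorm b)"
    using assms(3) unfolding oplus_MBI_def by blast
  interpret decay_setting Ii gam mu \<rho> \<phi>
  proof
    show "gain_operator Ii gam mu" "Kinf \<rho>" "Kinf \<phi>" by fact+
    show "supnorm s \<le> \<phi> (supnorm b)"
      if "s \<in> linf_pos" "b \<in> linf_pos" "\<forall>i. s i \<le> oplus b (Gam_rho Ii gam mu \<rho> s) i" for s b
      using mbi that by blast
    show "glob_attr_fixpoint (\<lambda>s. oplus (\<lambda>_. r) (Gam_rho Ii gam mu \<rho> s)) (sigma_star Ii gam mu \<rho> r)"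
      if "0 \<le> r" for r
      using assms(4) that by blast
  qed
  obtain S :: "int \<Rightarrow> real" where "decay_grid Ii gam mu \<rho> \<phi> S"
    by (rule decay_grid_exists)
  then interpret decay_grid Ii gam mu \<rho> \<phi> S .
  show ?thesis using path_strict_decay_decay_path by blast
qed

end
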